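(* Suppose all travel time functions $\tau_{i,p}$ are continuous and all externality functions $g_{i,p,j}$ are constant. Then every feasible budget vector $B$ that is both extremal and Pareto-minimal is strictly implementable: there exists $\lambda\in\mathbb{R}^J_{>0}$ such that $\mathrm{WE}(\lambda)\neq\emptyset$ and every $u\in\mathrm{WE}(\lambda)$ satisfies $G_j(u)\le B_j$ for all $j\in J$.
   Context: Let $G=(V,E)$ be a directed graph and $I$ a finite set of commodities; commodity $i$ has source $s_i$, sink $t_i$ and demand $d_i>0$. $\mathcal P_i$ is the set of simple $s_i$–$t_i$ paths, $\mathcal P=\{(i,p)\}$. A flow $x\in\mathbb{R}^{\mathcal P}_{\ge 0}$ is feasible if $\sum_{p\in\mathcal P_i}x_{i,p}=d_i$ for all $i$; $\mathcal F$ is the set of feasible flows. $J$ is a finite set of externality classes with externality functions $g_{i,p,j}\ge0$ and $G_j(x)=\sum_{(i,p)}g_{i,p,j}(x)x_{i,p}$. Travel times $\tau_{i,p}:\mathcal F\to\mathbb{R}$. For $\lambda\in\mathbb{R}^J_{\ge0}$, $c^\lambda_{i,p}(x)=\tau_{i,p}(x)+\sum_j\lambda_jg_{i,p,j}(x)$; $x\in\mathrm{WE}(\lambda)$ means $x\in\mathcal F$ and $x_{i,p}>0$ implies $c^\lambda_{i,p}(x)\le c^\lambda_{i,q}(x)$ for all $q\in\mathcal P_i$. A budget $B\in\mathbb{R}^J_{\ge0}$ is feasible if some $x\in\mathcal F$ has $G_j(x)\le B_j$ for all $j$; it is Pareto-minimal if no other feasible $B'\ne B$ satisfies $B'_j\le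 B_j$ for all $j$; it is extremal if it is not a convex combination of two distinct feasible budget vectors. *)

theory Defs
  imports "HOL-Analysis.Analysis"
begin

definition simple_path :: "'v set \<Rightarrow> ('v \<times> 'v) set \<Rightarrow> 'v \<Rightarrow> 'v \<Rightarrow> 'v list \<Rightarrow> bool" where
  "simple_path V E s t p \<longleftrightarrow> p \<noteq> [] \<and> hd p = s \<and> last p = t \<and> distinct p \<and> set p \<subseteq> V
     \<and> (\<forall>k. Suc k < length p \<longrightarrow> (p ! k, p ! Suc k) \<in> E)"

definition paths :: "'v set \<Rightarrow> ('v \<times> 'v) set \<Rightarrow> ('i \<Rightarrow> 'v) \<Rightarrow> ('i \<Rightarrow> 'v) \<Rightarrow> 'i \<Rightarrow> 'v list set" where
  "paths V E s t i = {p. simple_path V E (s i) (t i) p}"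

definition Pidx :: "'v set \<Rightarrow> ('v \<times> 'v) set \<Rightarrow> ('i \<Rightarrow> 'v) \<Rightarrow> ('i \<Rightarrow> 'v) \<Rightarrow> 'i set \<Rightarrow> ('i \<times> 'v list) set" where
  "Pidx V E s t I = {(i, p). i \<in> I \<and> p \<in> paths V E s t i}"

text \<open>Feasible flows: vectors in R^\<P> (functions vanishing outside \<P>), nonnegative,
  meeting each demand.\<close>
definition feasible_flows ::
  "'v set \<Rightarrow> ('v \<times> 'v) set \<Rightarrow> ('i \<Rightarrow> 'v) \<Rightarrow> ('i \<Rightarrow> 'v) \<Rightarrow> 'i set \<Rightarrow> ('i \<Rightarrow> real)
    \<Rightarrow> ('i \<times> 'v list \<Rightarrow> real) set" where
  "feasible_flows V E s t I d = {x.
      (\<forall>ip. ip \<notin> Pidx V E s t I \<longrightarrow> x ip = 0)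
    \<and> (\<forall>ip\<in>Pidx V E s t I. x ip \<ge> 0)
    \<and> (\<forall>i\<in>I. (\<Sum>p\<in>paths V E s t i. x (i, p)) = d i)}"

definition Gext ::
  "'v set \<Rightarrow> ('v \<times> 'v) set \<Rightarrow> ('i \<Rightarrow> 'v) \<Rightarrow> ('i \<Rightarrow> 'v) \<Rightarrow> 'i set
    \<Rightarrow> ('i \<Rightarrow> 'v list \<Rightarrow> 'j \<Rightarrow> ('i \<times> 'v list \<Rightarrow> real) \<Rightarrow> real)
    \<Rightarrow> 'j \<Rightarrow> ('i \<times> 'v list \<Rightarrow> real) \<Rightarrow> real" where
  "Gext V E s t I g j x = (\<Sum>(i, p)\<in>Pidx V E s t I. g i p j x * x (i, p))"

text \<open>Budget vectors are elements of R^J_{\<ge>0}, represented as functions vanishing outside J.\<close>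
definition feasible_budget ::
  "'v set \<Rightarrow> ('v \<times> 'v) set \<Rightarrow> ('i \<Rightarrow> 'v) \<Rightarrow> ('i \<Rightarrow> 'v) \<Rightarrow> 'i set \<Rightarrow> ('i \<Rightarrow> real)
    \<Rightarrow> 'j set \<Rightarrow> ('i \<Rightarrow> 'v list \<Rightarrow> 'j \<Rightarrow> ('i \<times> 'v list \<Rightarrow> real) \<Rightarrow> real)
    \<Rightarrow> ('j \<Rightarrow> real) \<Rightarrow> bool" where
  "feasible_budget V E s t I d J g B \<longleftrightarrow>
     (\<forall>j. j \<notin> J \<longrightarrow> B j = 0) \<and> (\<forall>j\<in>J. B j \<ge> 0) \<and>
     (\<exists>x\<in>feasible_flows V E s t I d. \<forall>j\<in>J. Gext V E s t I g j x \<le> B j)"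

definition pareto_minimal where
  "pareto_minimal V E s t I d J g B \<longleftrightarrow> feasible_budget V E s t I d J g B \<and>
     \<not> (\<exists>B'. feasible_budget V E s t I d J g B' \<and> B' \<noteq> B \<and> (\<forall>j\<in>J. B' j \<le> B j))"

definition extremal where
  "extremal V E s t I d J g B \<longleftrightarrow> feasible_budget V E s t I d J g B \<and>
     \<not> (\<exists>B1 B2 (\<theta>::real). feasible_budget V E s t I d J g B1 \<and> feasible_budget V E s t I d J g B2
         \<and> B1 \<noteq> B2 \<and> 0 < \<theta> \<and> \<theta> < 1 \<and> B = (\<lambda>j. \<theta> * B1 j + (1 - \<theta>) * B2 j))"

definition gcost where
  "gcost J \<tau> g (lam :: 'j \<Rightarrow> real) i p x = \<tau> i p x + (\<Sum>j\<in>J. lam j * g i p j x)"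

definition WE where
  "WE V E s t I d J \<tau> g lam = {x. x \<in> feasible_flows V E s t I d \<and>
     (\<forall>i\<in>I. \<forall>p\<in>paths V E s t i. x (i, p) > 0 \<longrightarrow>
        (\<forall>q\<in>paths V E s t i. gcost J \<tau> g lam i p x \<le> gcost J \<tau> g lam i q x))}"

end

theory Submission
  imports Defs
begin

text \<open>With constant externalities the loads G_j are linear in the flow, so B = G(x0) for a flow x0
  by Pareto-minimality, and extremality forces all paths used by x0 within a commodity to carry the
  same externality vector. Gordan's alternative then yields weights lam0 > 0 under which these used
  paths are exactly the paths of minimal weighted externality: the dual alternative would give a
  rerouting of x0 that either lowers some load (contradicting Pareto-minimality) or keeps the loads
  while using a path with a different externality vector (contradicting extremality). Scaling lam0
  by a factor M that dominates the bounded travel times, every Wardrop equilibrium uses only such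
  paths, hence has the loads of x0; equilibria exist by Brouwer's theorem applied to Nash's map.\<close>

section \<open>Brouwer's theorem for cubes of real functions\<close>

lemma tendsto_fun_iff_pointwise:
  fixes X :: "'b \<Rightarrow> 'a \<Rightarrow> 'c::topological_space"
  shows "(X \<longlongrightarrow> x) F \<longleftrightarrow> (\<forall>a. ((\<lambda>k. X k a) \<longlongrightarrow> x a) F)"
  using limitin_componentwise[of "\<lambda>_. euclidean" UNIV X x F]
  by (simp add: euclidean_product_topology)

lemma continuous_on_coordinate [continuous_intros]: "continuous_on S (\<lambda>x. x a)"
  by (rule continuous_on_subset[OF continuous_on_product_coordinates]) simp

lemma continuous_on_if_const [continuous_intros]:
  "(P \<Longrightarrow> continuous_on S f) \<Longrightarrow> (\<not> P \<Longrightarrow> continuous_on S g) \<Longrightarrow>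
    continuous_on S (\<lambda>x. if P then f x else g x)"
  by (cases P) auto

definition coord_cube :: "'a set \<Rightarrow> real \<Rightarrow> ('a \<Rightarrow> real) set" where
  "coord_cube A C = {x. (\<forall>a. a \<notin> A \<longrightarrow> x a = 0) \<and> (\<forall>a\<in>A. 0 \<le> x a \<and> x a \<le> C)}"

lemma compact_coord_cube: "compact (coord_cube A C)"
proof -
  have "coord_cube A C = PiE UNIV (\<lambda>a. if a \<in> A then {0..C} else {0})"
    unfolding coord_cube_def PiE_iff by (auto split: if_splits)
  moreover have "compactin (product_topology (\<lambda>_. euclidean) UNIV) \<dots>"
    by (auto simp: compactin_PiE)
  ultimately show ?thesis
    by (simp add: euclidean_product_topology)
qed

definition grid_point :: "nat \<Rightarrow> nat \<Rightarrow> (nat \<Rightarrow> nat) \<Rightarrow> nat \<Rightarrow> real" where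
  "grid_point n p x = (\<lambda>i. if i < n then real (x i) / real p else 0)"

definition grid_cell :: "nat \<Rightarrow> (nat \<Rightarrow> nat) \<Rightarrow> (nat \<Rightarrow> nat) \<Rightarrow> bool" where
  "grid_cell n q r \<longleftrightarrow> (\<forall>j<n. q j \<le> r j \<and> r j \<le> q j + 1)"

lemma grid_point_in_coord_cube:
  "0 < p \<Longrightarrow> \<forall>i<n. x i \<le> p \<Longrightarrow> grid_point n p x \<in> coord_cube {..<n} 1"
  by (auto simp: grid_point_def coord_cube_def)

lemma grid_cell_vertex_in_coord_cube:
  assumes "0 < p" "\<forall>i<n. q i < p" "grid_cell n q x"
  shows "grid_point n p x \<in> coord_cube {..<n} 1"
proof (rule grid_point_in_coord_cube)
  show "\<forall>i<n. x i \<le> p"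
  proof (intro allI impI)
    fix i
    assume "i < n"
    then have "x i \<le> q i + 1" "q i < p"
      using assms unfolding grid_cell_def by auto
    then show "x i \<le> p"
      by linarith
  qed
qed (use assms in auto)

text \<open>Kuhn's combinatorial lemma, applied to the labelling that records in which direction f moves
  each coordinate of a grid point.\<close>
lemma kuhn_cell_with_opposite_moves:
  fixes f :: "(nat \<Rightarrow> real) \<Rightarrow> nat \<Rightarrow> real" and k :: nat
  assumes into: "f \<in> coord_cube {..<n} 1 \<rightarrow> coord_cube {..<n} 1"
  defines "grid \<equiv> grid_point n (Suc k)"
  shows "\<exists>q r s. (\<forall>i<n. q i < Suc k) \<and> (\<forall>i<n. grid_cell n q (r i) \<and> grid_cell n q (s i) \<and>
    grid (r i) i \<le> f (grid (r i)) i \<and> f (grid (s i)) i \<le> grid (s i) i)"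
proof -
  let ?C = "coord_cube {..<n} 1" and ?p = "Suc k"
  define label where "label x i = (if x i < ?p \<and> grid x i \<le> f (grid x) i then 0 else 1 :: nat)" for x i
  have label_0: "label x i = 0" if "\<forall>i<n. x i \<le> ?p" "i < n" "x i = 0" for x i
  proof -
    have "f (grid x) \<in> ?C"
      using that into grid_point_in_coord_cube[of ?p n x] by (auto simp: grid_def)
    then show ?thesis
      using that by (simp add: label_def grid_def grid_point_def coord_cube_def)
  qed
  obtain q where q: "\<forall>i<n. q i < ?p"
    and rs: "\<forall>i<n. \<exists>r s. grid_cell n q r \<and> grid_cell n q s \<and> label r i \<noteq> label s i"
    by (rule kuhn_lemma[of ?p n label]) (use label_0 in \<open>auto simp: label_def grid_cell_def\<close>)
  have "\<exists>r s. grid_cell n q r \<and> grid_cell n q s \<and> grid r i \<le> f (grid r) i \<and> f (grid s) i \<le> grid s i"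
    if i: "i < n" for i
  proof -
    have up: "grid x i \<le> f (grid x) i" if "label x i = 0" for x
      using that by (auto simp: label_def split: if_splits)
    have down: "f (grid x) i \<le> grid x i" if "grid_cell n q x" "label x i \<noteq> 0" for x
    proof (cases "x i < ?p")
      case True
      then show ?thesis
        using that by (auto simp: label_def split: if_splits)
    next
      case False
      then have "x i = ?p"
        using that(1) q i by (force simp: grid_cell_def)
      then show ?thesis
        using into grid_cell_vertex_in_coord_cube[OF zero_less_Suc q that(1)] i
        by (auto simp: grid_def grid_point_def coord_cube_def)
    qed
    obtain r s where "grid_cell n q r" "grid_cell n q s" "label r i \<noteq> label s i"
      using rs i by blast
    moreover have "label r i = 0 \<and> label s i \<noteq> 0 \<or> label s i = 0 \<and> label r i \<noteq> 0"
      using \<open>label r i \<noteq> label s i\<close> by (auto simp: label_def split: if_splits)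
    ultimately show ?thesis
      using up down by blast
  qed
  then show ?thesis
    using q by metis
qed

lemma tendsto_grid_cell_vertex:
  assumes "strict_mono \<sigma>" and lim: "((\<lambda>k. grid_point n (Suc k) (Q k)) \<circ> \<sigma>) \<longlonglongrightarrow> z"
    and z: "z \<in> coord_cube {..<n} 1" and Y: "\<And>k. grid_cell n (Q (\<sigma> k)) (Y k)"
  shows "(\<lambda>k. grid_point n (Suc (\<sigma> k)) (Y k)) \<longlonglongrightarrow> z"
  unfolding tendsto_fun_iff_pointwise
proof
  fix j
  show "(\<lambda>k. grid_point n (Suc (\<sigma> k)) (Y k) j) \<longlonglongrightarrow> z j"
  proof (cases "j < n")
    case True
    have mesh: "(\<lambda>k. 1 / real (Suc (\<sigma> k))) \<longlonglongrightarrow> 0"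
      using LIMSEQ_subseq_LIMSEQ[OF LIMSEQ_inverse_real_of_nat \<open>strict_mono \<sigma>\<close>]
      by (simp add: o_def inverse_eq_divide)
    have "(\<lambda>k. grid_point n (Suc (\<sigma> k)) (Y k) j - grid_point n (Suc (\<sigma> k)) (Q (\<sigma> k)) j) \<longlonglongrightarrow> 0"
    proof (rule Lim_null_comparison[OF always_eventually mesh], intro allI)
      fix k
      have "Q (\<sigma> k) j \<le> Y k j" "Y k j \<le> Q (\<sigma> k) j + 1"
        using Y[of k] True by (auto simp: grid_cell_def)
      then show "norm (grid_point n (Suc (\<sigma> k)) (Y k) j - grid_point n (Suc (\<sigma> k)) (Q (\<sigma> k)) j)
          \<le> 1 / real (Suc (\<sigma> k))"
        using True by (auto simp: grid_point_def diff_divide_distrib[symmetric] divide_right_mono)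
    qed
    moreover have "(\<lambda>k. grid_point n (Suc (\<sigma> k)) (Q (\<sigma> k)) j) \<longlonglongrightarrow> z j"
      using lim by (simp add: tendsto_fun_iff_pointwise o_def)
    ultimately show ?thesis
      by (rule Lim_transform[rotated])
  next
    case False
    then show ?thesis
      using z by (simp add: grid_point_def coord_cube_def)
  qed
qed

text \<open>The dimension depends on the data of the routing game, so the cube lives in nat \<Rightarrow> real
  instead of a type of class euclidean_space, as the library theorem brouwer would require.\<close>
lemma brouwer_coord_cube_nat:
  fixes f :: "(nat \<Rightarrow> real) \<Rightarrow> nat \<Rightarrow> real"
  assumes cont: "continuous_on (coord_cube {..<n} 1) f"
    and into: "f \<in> coord_cube {..<n} 1 \<rightarrow> coord_cube {..<n} 1"
  shows "\<exists>z\<in>coord_cube {..<n} 1. f z = z"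
proof -
  let ?C = "coord_cube {..<n} 1" and ?grid = "\<lambda>k. grid_point n (Suc k)"
  obtain Q R S where Q: "\<And>k i. i < n \<Longrightarrow> Q k i < Suc k"
    and RS: "\<And>k i. i < n \<Longrightarrow> grid_cell n (Q k) (R k i) \<and> grid_cell n (Q k) (S k i) \<and>
      ?grid k (R k i) i \<le> f (?grid k (R k i)) i \<and> f (?grid k (S k i)) i \<le> ?grid k (S k i) i"
    using kuhn_cell_with_opposite_moves[OF into] by metis
  have vertex_in: "?grid k x \<in> ?C" if "grid_cell n (Q k) x" for k x
    using Q that by (intro grid_cell_vertex_in_coord_cube) auto
  have "\<forall>k. ?grid k (Q k) \<in> ?C"
    using vertex_in by (simp add: grid_cell_def)
  then obtain z \<sigma> where z: "z \<in> ?C" and \<sigma>: "strict_mono \<sigma>" and lim: "((\<lambda>k. ?grid k (Q k)) \<circ> \<sigma>) \<longlonglongrightarrow> z"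
    by (rule seq_compactE[OF compact_imp_seq_compact[OF compact_coord_cube]])
  note vertex_lim = tendsto_grid_cell_vertex[OF \<sigma> lim z]
  have coord_lim: "(\<lambda>k. ?grid (\<sigma> k) (Y k) j) \<longlonglongrightarrow> z j"
    and image_lim: "(\<lambda>k. f (?grid (\<sigma> k) (Y k)) j) \<longlonglongrightarrow> f z j"
    if Y: "\<And>k. grid_cell n (Q (\<sigma> k)) (Y k)" for Y j
  proof -
    have "(\<lambda>k. f (?grid (\<sigma> k) (Y k))) \<longlonglongrightarrow> f z"
      using vertex_in Y by (intro continuous_on_tendsto_compose[OF cont vertex_lim[OF Y] z]) auto
    then show "(\<lambda>k. f (?grid (\<sigma> k) (Y k)) j) \<longlonglongrightarrow> f z j"
      by (simp add: tendsto_fun_iff_pointwise)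
    show "(\<lambda>k. ?grid (\<sigma> k) (Y k) j) \<longlonglongrightarrow> z j"
      using vertex_lim[OF Y] by (simp add: tendsto_fun_iff_pointwise)
  qed
  have "f z i = z i" for i
  proof (cases "i < n")
    case True
    have R: "\<And>k. grid_cell n (Q (\<sigma> k)) (R (\<sigma> k) i)" and S: "\<And>k. grid_cell n (Q (\<sigma> k)) (S (\<sigma> k) i)"
      using RS[OF True] by blast+
    have "z i \<le> f z i"
      using RS[OF True] by (intro LIMSEQ_le[OF coord_lim[OF R] image_lim[OF R]]) auto
    moreover have "f z i \<le> z i"
      using RS[OF True] by (intro LIMSEQ_le[OF image_lim[OF S] coord_lim[OF S]]) auto
    ultimately show ?thesis
      by simp
  next
    case False
    then show ?thesis
      using z into by (auto simp: coord_cube_def)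
  qed
  then show ?thesis
    using z by blast
qed

lemma brouwer_coord_cube:
  fixes f :: "('a \<Rightarrow> real) \<Rightarrow> 'a \<Rightarrow> real"
  assumes "finite A"
    and cont: "continuous_on (coord_cube A 1) f" and into: "f \<in> coord_cube A 1 \<rightarrow> coord_cube A 1"
  shows "\<exists>z\<in>coord_cube A 1. f z = z"
proof -
  let ?n = "card A"
  obtain e where e: "bij_betw e {..<?n} A"
    using \<open>finite A\<close> ex_bij_betw_nat_finite lessThan_atLeast0 by metis
  define to_nat where "to_nat x = (\<lambda>k. if k < ?n then x (e k) else 0)" for x :: "'a \<Rightarrow> real"
  define from_nat where "from_nat z = (\<lambda>a. if a \<in> A then z (inv_into {..<?n} e a) else 0)"
    for z :: "nat \<Rightarrow> real"
  have "continuous_on (coord_cube A 1) to_nat"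
    unfolding to_nat_def by (intro continuous_on_coordinatewise_then_product continuous_intros)
  moreover have "to_nat \<in> coord_cube A 1 \<rightarrow> coord_cube {..<?n} 1"
    using bij_betwE[OF e] by (auto simp: to_nat_def coord_cube_def)
  moreover have "continuous_on (coord_cube {..<?n} 1) from_nat"
    unfolding from_nat_def by (intro continuous_on_coordinatewise_then_product continuous_intros)
  moreover have "from_nat \<in> coord_cube {..<?n} 1 \<rightarrow> coord_cube A 1"
    using bij_betw_inv_into[OF e] by (auto simp: from_nat_def coord_cube_def dest: bij_betwE)
  moreover have "from_nat (to_nat x) = x" if "x \<in> coord_cube A 1" for x
  proof
    fix a
    show "from_nat (to_nat x) a = x a"
      using that bij_betw_inv_into[OF e] bij_betw_inv_into_right[OF e]
      by (auto simp: from_nat_def to_nat_def coord_cube_def dest: bij_betwE)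
  qed
  ultimately obtain z where "z \<in> coord_cube A 1" "f z = z"
    using invertible_fixpoint_property[OF _ _ _ _ _ brouwer_coord_cube_nat cont into] by blast
  then show ?thesis
    by blast
qed

section \<open>Flow polytopes\<close>

definition flow_polytope :: "'i set \<Rightarrow> ('i \<Rightarrow> 'p set) \<Rightarrow> ('i \<Rightarrow> real) \<Rightarrow> ('i \<times> 'p \<Rightarrow> real) set" where
  "flow_polytope I P d = {x. (\<forall>ip. ip \<notin> Sigma I P \<longrightarrow> x ip = 0) \<and> (\<forall>ip\<in>Sigma I P. 0 \<le> x ip)
     \<and> (\<forall>i\<in>I. (\<Sum>p\<in>P i. x (i, p)) = d i)}"

lemma flow_polytope_nonneg: "x \<in> flow_polytope I P d \<Longrightarrow> 0 \<le> x ip"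
  by (cases ip) (fastforce simp: flow_polytope_def)

lemma flow_polytope_demand: "x \<in> flow_polytope I P d \<Longrightarrow> i \<in> I \<Longrightarrow> (\<Sum>p\<in>P i. x (i, p)) = d i"
  unfolding flow_polytope_def by blast

lemma flow_polytope_outside: "x \<in> flow_polytope I P d \<Longrightarrow> ip \<notin> Sigma I P \<Longrightarrow> x ip = 0"
  unfolding flow_polytope_def by blast

lemma flow_polytope_le_demand:
  assumes "x \<in> flow_polytope I P d" "i \<in> I" "p \<in> P i" "finite (P i)"
  shows "x (i, p) \<le> d i"
proof -
  have "x (i, p) \<le> (\<Sum>q\<in>P i. x (i, q))"
    using assms by (intro member_le_sum flow_polytope_nonneg) auto
  then show ?thesis
    using assms by (simp add: flow_polytope_demand)
qed

lemma flow_polytope_used_path: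
  assumes "x \<in> flow_polytope I P d" "i \<in> I" "0 < d i"
  obtains p where "p \<in> P i" "0 < x (i, p)"
proof -
  have "\<not> (\<forall>p\<in>P i. x (i, p) \<le> 0)"
    using assms sum_nonpos[of "P i" "\<lambda>p. x (i, p)"] by (auto simp: flow_polytope_demand)
  then show ?thesis
    using that by force
qed

lemma compact_flow_polytope:
  assumes "finite I" "\<And>i. finite (P i)"
  shows "compact (flow_polytope I P d)"
proof -
  define C where "C = Max (insert 0 (d ` I))"
  have "flow_polytope I P d
      = coord_cube (Sigma I P) C \<inter> (\<Inter>i\<in>I. {x. (\<Sum>p\<in>P i. x (i, p)) = d i})"
  proof (intro equalityI subsetI IntI)
    fix x
    assume x: "x \<in> flow_polytope I P d"
    have "x (i, p) \<le> C" if "i \<in> I" "p \<in> P i" for i p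
      using flow_polytope_le_demand[OF x that assms(2)] that assms(1)
      by (auto simp: C_def intro: order_trans[OF _ Max_ge])
    then show "x \<in> coord_cube (Sigma I P) C"
      using x by (auto simp: coord_cube_def flow_polytope_def)
    show "x \<in> (\<Inter>i\<in>I. {x. (\<Sum>p\<in>P i. x (i, p)) = d i})"
      using x by (simp add: flow_polytope_demand)
  qed (auto simp: coord_cube_def flow_polytope_def)
  moreover have "closed (\<Inter>i\<in>I. {x. (\<Sum>p\<in>P i. x (i, p)) = d i})"
    by (intro closed_INT ballI closed_Collect_eq continuous_intros)
  ultimately show ?thesis
    by (simp add: compact_Int_closed compact_coord_cube)
qed

text \<open>Maps the unit cube onto the flow polytope, inverting the scaling x (i, p) / d i of flows.\<close>
definition flow_retraction ::
  "'i set \<Rightarrow> ('i \<Rightarrow> 'p set) \<Rightarrow> ('i \<Rightarrow> real) \<Rightarrow> ('i \<Rightarrow> 'p) \<Rightarrow> ('i \<times> 'p \<Rightarrow> real) \<Rightarrow> 'i \<times> 'p \<Rightarrow> real"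
  where
  "flow_retraction I P d p0 z = (\<lambda>(i, p). if i \<in> I \<and> p \<in> P i then
      d i * (z (i, p) + (if p = p0 i then max 1 (\<Sum>q\<in>P i. z (i, q)) - (\<Sum>q\<in>P i. z (i, q)) else 0))
        / max 1 (\<Sum>q\<in>P i. z (i, q))
    else 0)"

lemma continuous_on_flow_retraction: "continuous_on S (flow_retraction I P d p0)"
  unfolding flow_retraction_def
  by (intro continuous_on_coordinatewise_then_product) (auto intro!: continuous_intros)

lemma flow_retraction_in_flow_polytope:
  assumes "\<And>i. finite (P i)" "\<And>i. i \<in> I \<Longrightarrow> 0 \<le> d i" "\<And>i. i \<in> I \<Longrightarrow> p0 i \<in> P i"
    and z: "z \<in> coord_cube (Sigma I P) 1"
  shows "flow_retraction I P d p0 z \<in> flow_polytope I P d"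
proof -
  let ?r = "flow_retraction I P d p0 z"
  have "(\<Sum>p\<in>P i. ?r (i, p)) = d i" if i: "i \<in> I" for i
  proof -
    let ?S = "\<Sum>q\<in>P i. z (i, q)"
    have "(\<Sum>p\<in>P i. ?r (i, p))
        = (\<Sum>p\<in>P i. d i * (z (i, p) + (if p = p0 i then max 1 ?S - ?S else 0)) / max 1 ?S)"
      using i by (intro sum.cong) (auto simp: flow_retraction_def)
    also have "\<dots> = d i * (?S + (max 1 ?S - ?S)) / max 1 ?S"
      using assms(1,3) i
      by (simp add: sum_divide_distrib[symmetric] sum_distrib_left[symmetric] sum.distrib)
    also have "\<dots> = d i"
      by simp
    finally show ?thesis .
  qed
  moreover have "0 \<le> ?r (i, p)" for i p
  proof (cases "i \<in> I \<and> p \<in> P i")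
    case True
    then have "0 \<le> z (i, p)" "0 \<le> d i"
      using z assms(2) by (auto simp: coord_cube_def)
    then show ?thesis
      using True by (simp add: flow_retraction_def)
  qed (auto simp: flow_retraction_def)
  moreover have "?r (i, p) = 0" if "(i, p) \<notin> Sigma I P" for i p
    using that by (auto simp: flow_retraction_def)
  ultimately show ?thesis
    unfolding flow_polytope_def by auto
qed

lemma flow_retraction_scaled_flow:
  assumes x: "x \<in> flow_polytope I P d" and d: "\<And>i. i \<in> I \<Longrightarrow> 0 < d i"
  shows "flow_retraction I P d p0 (\<lambda>(i, p). if i \<in> I then x (i, p) / d i else 0) = x"
proof
  fix ip :: "'a \<times> 'b"
  obtain i p where ip: "ip = (i, p)"
    by fastforce
  have "(\<Sum>q\<in>P i. x (i, q) / d i) = 1" if "i \<in> I"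
    using x that d[OF that] by (simp add: sum_divide_distrib[symmetric] flow_polytope_demand)
  then show "flow_retraction I P d p0 (\<lambda>(i, p). if i \<in> I then x (i, p) / d i else 0) ip = x ip"
    using x d by (auto simp: ip flow_retraction_def flow_polytope_outside)
qed

lemma brouwer_flow_polytope:
  assumes "finite I" "\<And>i. finite (P i)" and d: "\<And>i. i \<in> I \<Longrightarrow> 0 < d i"
    and P: "\<And>i. i \<in> I \<Longrightarrow> P i \<noteq> {}"
    and cont: "continuous_on (flow_polytope I P d) T"
    and into: "T \<in> flow_polytope I P d \<rightarrow> flow_polytope I P d"
  shows "\<exists>x\<in>flow_polytope I P d. T x = x"
proof -
  let ?F = "flow_polytope I P d" and ?Q = "coord_cube (Sigma I P) 1"
  define p0 where "p0 i = (SOME p. p \<in> P i)" for i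
  have p0: "p0 i \<in> P i" if "i \<in> I" for i
    using P[OF that] by (simp add: p0_def some_in_eq)
  define scale where "scale x = (\<lambda>(i, p). if i \<in> I then x (i, p) / d i else 0)"
    for x :: "'a \<times> 'b \<Rightarrow> real"
  have "continuous_on ?F scale"
    unfolding scale_def using d
    by (intro continuous_on_coordinatewise_then_product) (force intro!: continuous_intros)
  moreover have "scale \<in> ?F \<rightarrow> ?Q"
  proof
    fix x
    assume x: "x \<in> ?F"
    have "0 \<le> x (i, p) / d i \<and> x (i, p) / d i \<le> 1" if "i \<in> I" "p \<in> P i" for i p
      using flow_polytope_le_demand[OF x that assms(2)] flow_polytope_nonneg[OF x] d[OF that(1)]
      by simp
    then show "scale x \<in> ?Q"
      using x by (auto simp: scale_def coord_cube_def flow_polytope_outside)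
  qed
  moreover have "flow_retraction I P d p0 \<in> ?Q \<rightarrow> ?F"
    using assms(2) d p0 by (auto intro!: flow_retraction_in_flow_polytope less_imp_le)
  moreover have "flow_retraction I P d p0 (scale x) = x" if "x \<in> ?F" for x
    unfolding scale_def using that d by (rule flow_retraction_scaled_flow)
  ultimately show ?thesis
    using invertible_fixpoint_property[OF _ _ continuous_on_flow_retraction _ _ brouwer_coord_cube
        cont into]
      assms(1,2) by (metis finite_SigmaI)
qed

section \<open>Existence of Wardrop equilibria via Nash's map\<close>

definition wardrop_equilibrium ::
  "'i set \<Rightarrow> ('i \<Rightarrow> 'p set) \<Rightarrow> ('i \<Rightarrow> real) \<Rightarrow> ('i \<Rightarrow> 'p \<Rightarrow> ('i \<times> 'p \<Rightarrow> real) \<Rightarrow> real)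
    \<Rightarrow> ('i \<times> 'p \<Rightarrow> real) \<Rightarrow> bool" where
  "wardrop_equilibrium I P d c x \<longleftrightarrow> x \<in> flow_polytope I P d \<and>
     (\<forall>i\<in>I. \<forall>p\<in>P i. 0 < x (i, p) \<longrightarrow> (\<forall>q\<in>P i. c i p x \<le> c i q x))"

definition avg_cost ::
  "('i \<Rightarrow> 'p set) \<Rightarrow> ('i \<Rightarrow> real) \<Rightarrow> ('i \<Rightarrow> 'p \<Rightarrow> ('i \<times> 'p \<Rightarrow> real) \<Rightarrow> real)
    \<Rightarrow> 'i \<Rightarrow> ('i \<times> 'p \<Rightarrow> real) \<Rightarrow> real" where
  "avg_cost P d c i x = (\<Sum>q\<in>P i. x (i, q) * c i q x) / d i"

definition nash_map ::
  "'i set \<Rightarrow> ('i \<Rightarrow> 'p set) \<Rightarrow> ('i \<Rightarrow> real) \<Rightarrow> ('i \<Rightarrow> 'p \<Rightarrow> ('i \<times> 'p \<Rightarrow> real) \<Rightarrow> real)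
    \<Rightarrow> ('i \<times> 'p \<Rightarrow> real) \<Rightarrow> 'i \<times> 'p \<Rightarrow> real" where
  "nash_map I P d c x = (\<lambda>(i, p). if i \<in> I \<and> p \<in> P i then
      (x (i, p) + d i * max 0 (avg_cost P d c i x - c i p x))
        / (1 + (\<Sum>q\<in>P i. max 0 (avg_cost P d c i x - c i q x)))
    else 0)"

text \<open>The hypothesis \<open>balance\<close> is the fixed-point equation of Nash's map for one commodity,
  x q = (x q + D * gain q) / (1 + (\<Sum>r\<in>Q. gain r)), with the denominator cleared.\<close>
lemma nash_balance_imp_minimal_cost:
  fixes x c :: "'p \<Rightarrow> real"
  assumes "finite Q" "0 < D" and sum: "(\<Sum>q\<in>Q. x q) = D" and nonneg: "\<And>q. q \<in> Q \<Longrightarrow> 0 \<le> x q"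
    and balance: "\<And>q. q \<in> Q \<Longrightarrow> x q * (\<Sum>r\<in>Q. max 0 (m - c r)) = D * max 0 (m - c q)"
    and m: "m = (\<Sum>q\<in>Q. x q * c q) / D"
    and q: "q \<in> Q" "0 < x q" and r: "r \<in> Q"
  shows "c q \<le> c r"
proof -
  define gain where "gain r = max 0 (m - c r)" for r
  have "(\<Sum>r\<in>Q. x r * (m - c r)) = m * (\<Sum>r\<in>Q. x r) - (\<Sum>r\<in>Q. x r * c r)"
    by (simp add: algebra_simps sum_subtractf sum_distrib_left)
  also have "\<dots> = 0"
    using sum \<open>0 < D\<close> by (simp add: m)
  finally have mean: "(\<Sum>r\<in>Q. x r * (m - c r)) = 0" .
  have "(\<Sum>r\<in>Q. gain r) = 0"
  proof (rule ccontr)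
    assume "(\<Sum>r\<in>Q. gain r) \<noteq> 0"
    then have G: "0 < (\<Sum>r\<in>Q. gain r)"
      using sum_nonneg[of Q gain] by (force simp: gain_def)
    have cheaper: "c r < m" if "r \<in> Q" "0 < x r" for r
    proof -
      have "0 < x r * (\<Sum>r\<in>Q. gain r)"
        using G that(2) by simp
      then have "0 < max 0 (m - c r)"
        using balance[OF that(1)] \<open>0 < D\<close> by (simp add: gain_def zero_less_mult_iff)
      then show ?thesis
        by simp
    qed
    have "0 < (\<Sum>r\<in>Q. x r * (m - c r))"
    proof (rule sum_pos2[OF \<open>finite Q\<close> q(1)])
      show "0 < x q * (m - c q)"
        using cheaper[OF q] q(2) by simp
      show "0 \<le> x r * (m - c r)" if "r \<in> Q" for r
        using cheaper[OF that] nonneg[OF that] by (cases "0 < x r") auto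
    qed
    then show False
      using mean by simp
  qed
  then have above: "m \<le> c r" if "r \<in> Q" for r
    using that sum_nonneg_eq_0_iff[OF \<open>finite Q\<close>, of gain] by (force simp: gain_def)
  have "(\<Sum>r\<in>Q. x r * (c r - m)) = - (\<Sum>r\<in>Q. x r * (m - c r))"
    by (simp add: sum_negf[symmetric] algebra_simps)
  then have "(\<Sum>r\<in>Q. x r * (c r - m)) = 0"
    using mean by simp
  then have "\<forall>r\<in>Q. x r * (c r - m) = 0"
    by (subst (asm) sum_nonneg_eq_0_iff[OF \<open>finite Q\<close>]) (use above nonneg in auto)
  then show ?thesis
    using q above[OF r] by auto
qed

lemma nash_map_in_flow_polytope:
  assumes "\<And>i. finite (P i)" "\<And>i. i \<in> I \<Longrightarrow> 0 < d i" "x \<in> flow_polytope I P d"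
  shows "nash_map I P d c x \<in> flow_polytope I P d"
proof -
  define gain where "gain i p = max 0 (avg_cost P d c i x - c i p x)" for i p
  have G: "0 \<le> (\<Sum>q\<in>P i. gain i q)" for i
    by (intro sum_nonneg) (simp add: gain_def)
  have "(\<Sum>p\<in>P i. nash_map I P d c x (i, p)) = d i" if i: "i \<in> I" for i
  proof -
    have "(\<Sum>p\<in>P i. nash_map I P d c x (i, p))
        = (\<Sum>p\<in>P i. (x (i, p) + d i * gain i p) / (1 + (\<Sum>q\<in>P i. gain i q)))"
      using i by (intro sum.cong) (auto simp: nash_map_def gain_def)
    also have "\<dots> = (d i + d i * (\<Sum>q\<in>P i. gain i q)) / (1 + (\<Sum>q\<in>P i. gain i q))"
      using assms(3) i
      by (simp add: sum_divide_distrib[symmetric] sum.distrib sum_distrib_left flow_polytope_demand)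
    also have "\<dots> = d i"
      using G[of i] by (simp add: field_simps)
    finally show ?thesis .
  qed
  moreover have "0 \<le> nash_map I P d c x (i, p)" for i p
  proof (cases "i \<in> I \<and> p \<in> P i")
    case True
    then show ?thesis
      using assms(2)[of i] G[of i] flow_polytope_nonneg[OF assms(3), of "(i, p)"]
      by (simp add: nash_map_def gain_def)
  qed (auto simp: nash_map_def)
  moreover have "nash_map I P d c x (i, p) = 0" if "(i, p) \<notin> Sigma I P" for i p
    using that by (auto simp: nash_map_def)
  ultimately show ?thesis
    unfolding flow_polytope_def by auto
qed

lemma continuous_on_nash_map:
  assumes "\<And>i. i \<in> I \<Longrightarrow> 0 < d i"
    and "\<And>i p. i \<in> I \<Longrightarrow> p \<in> P i \<Longrightarrow> continuous_on (flow_polytope I P d) (c i p)"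
  shows "continuous_on (flow_polytope I P d) (nash_map I P d c)"
proof (intro continuous_on_coordinatewise_then_product)
  fix ip :: "'a \<times> 'b"
  obtain i p where ip: "ip = (i, p)"
    by fastforce
  show "continuous_on (flow_polytope I P d) (\<lambda>x. nash_map I P d c x ip)"
  proof (cases "i \<in> I \<and> p \<in> P i")
    case True
    define gain where "gain q x = max 0 (avg_cost P d c i x - c i q x)" for q x
    have avg: "continuous_on (flow_polytope I P d) (avg_cost P d c i)"
      unfolding avg_cost_def using True assms by (intro continuous_intros) force+
    have gain: "continuous_on (flow_polytope I P d) (gain q)" if "q \<in> P i" for q
      unfolding gain_def using True that assms(2) by (intro continuous_intros avg) auto
    have "1 + (\<Sum>q\<in>P i. gain q x) \<noteq> 0" for x
      using sum_nonneg[of "P i" "\<lambda>q. gain q x"] by (auto simp: gain_def)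
    then have "continuous_on (flow_polytope I P d)
        (\<lambda>x. (x (i, p) + d i * gain p x) / (1 + (\<Sum>q\<in>P i. gain q x)))"
      using True by (intro continuous_intros gain) auto
    then show ?thesis
      using True by (simp add: ip nash_map_def gain_def)
  next
    case False
    show ?thesis
      unfolding ip nash_map_def case_prod_conv if_not_P[OF False] by simp
  qed
qed

lemma nash_map_fixpoint_imp_equilibrium:
  assumes "\<And>i. finite (P i)" "\<And>i. i \<in> I \<Longrightarrow> 0 < d i" "x \<in> flow_polytope I P d"
    and fixed: "nash_map I P d c x = x"
  shows "wardrop_equilibrium I P d c x"
  unfolding wardrop_equilibrium_def
proof (intro conjI assms(3) ballI impI)
  fix i p q
  assume i: "i \<in> I" and p: "p \<in> P i" "0 < x (i, p)" and q: "q \<in> P i"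
  define G where "G = (\<Sum>r\<in>P i. max 0 (avg_cost P d c i x - c i r x))"
  have "0 \<le> G"
    unfolding G_def by (intro sum_nonneg) simp
  have balance: "x (i, r) * G = d i * max 0 (avg_cost P d c i x - c i r x)" if "r \<in> P i" for r
  proof -
    have "x (i, r) = (x (i, r) + d i * max 0 (avg_cost P d c i x - c i r x)) / (1 + G)"
      using fun_cong[OF fixed, of "(i, r)"] i that by (simp add: nash_map_def G_def)
    then show ?thesis
      using \<open>0 \<le> G\<close> by (simp add: field_simps)
  qed
  show "c i p x \<le> c i q x"
  proof (rule nash_balance_imp_minimal_cost[where x = "\<lambda>r. x (i, r)" and c = "\<lambda>r. c i r x"])
    show "(\<Sum>r\<in>P i. x (i, r)) = d i"
      using assms(3) i by (rule flow_polytope_demand)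
    show "avg_cost P d c i x = (\<Sum>r\<in>P i. x (i, r) * c i r x) / d i"
      by (rule avg_cost_def)
    show "x (i, r) * (\<Sum>r'\<in>P i. max 0 (avg_cost P d c i x - c i r' x))
        = d i * max 0 (avg_cost P d c i x - c i r x)" if "r \<in> P i" for r
      using balance[OF that] by (simp add: G_def)
    show "0 \<le> x (i, r)" for r
      by (rule flow_polytope_nonneg[OF assms(3)])
  qed (use assms(1,2) i p q in auto)
qed

lemma wardrop_equilibrium_exists:
  assumes "finite I" "\<And>i. finite (P i)" "\<And>i. i \<in> I \<Longrightarrow> 0 < d i" "\<And>i. i \<in> I \<Longrightarrow> P i \<noteq> {}"
    and "\<And>i p. i \<in> I \<Longrightarrow> p \<in> P i \<Longrightarrow> continuous_on (flow_polytope I P d) (c i p)"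
  shows "\<exists>x. wardrop_equilibrium I P d c x"
proof -
  have into: "nash_map I P d c \<in> flow_polytope I P d \<rightarrow> flow_polytope I P d"
    using nash_map_in_flow_polytope[OF assms(2,3)] by (rule Pi_I)
  have cont: "continuous_on (flow_polytope I P d) (nash_map I P d c)"
    using assms(3,5) by (rule continuous_on_nash_map)
  have "\<exists>x\<in>flow_polytope I P d. nash_map I P d c x = x"
    using assms(1-4) cont into by (rule brouwer_flow_polytope)
  then obtain x where "x \<in> flow_polytope I P d" "nash_map I P d c x = x" ..
  then have "wardrop_equilibrium I P d c x"
    using assms(2,3) by (rule nash_map_fixpoint_imp_equilibrium[rotated 2])
  then show ?thesis
    by blast
qed

section \<open>Rerouting flow\<close>

definition flow_load ::
  "'i set \<Rightarrow> ('i \<Rightarrow> 'p set) \<Rightarrow> ('i \<Rightarrow> 'p \<Rightarrow> 'j \<Rightarrow> real) \<Rightarrow> ('i \<times> 'p \<Rightarrow> real) \<Rightarrow> 'j \<Rightarrow> real" where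
  "flow_load I P a x j = (\<Sum>i\<in>I. \<Sum>p\<in>P i. a i p j * x (i, p))"

definition reroute ::
  "'i set \<Rightarrow> ('i \<Rightarrow> 'p set) \<Rightarrow> ('i \<Rightarrow> 'p) \<Rightarrow> ('i \<times> 'p \<Rightarrow> real) \<Rightarrow> ('i \<times> 'p \<Rightarrow> real) \<Rightarrow> 'i \<times> 'p \<Rightarrow> real"
  where
  "reroute I P src m x = (\<lambda>(i, q). if i \<in> I \<and> q \<in> P i then
      x (i, q) + m (i, q) - (if q = src i then \<Sum>r\<in>P i. m (i, r) else 0) else 0)"

lemma reroute_weighted_sum:
  assumes "i \<in> I" "finite (P i)" "src i \<in> P i \<or> (\<Sum>r\<in>P i. m (i, r)) = 0"
  shows "(\<Sum>q\<in>P i. w q * reroute I P src m x (i, q))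
    = (\<Sum>q\<in>P i. w q * x (i, q)) + (\<Sum>q\<in>P i. m (i, q) * (w q - w (src i)))"
proof -
  have "(\<Sum>q\<in>P i. w q * reroute I P src m x (i, q))
      = (\<Sum>q\<in>P i. w q * x (i, q)) + (\<Sum>q\<in>P i. w q * m (i, q))
        - (\<Sum>q\<in>P i. if q = src i then w (src i) * (\<Sum>r\<in>P i. m (i, r)) else 0)"
    using assms(1)
    by (simp add: reroute_def algebra_simps sum.distrib sum_subtractf if_distrib[of "(*) _"] cong: if_cong)
  also have "\<dots> = (\<Sum>q\<in>P i. w q * x (i, q)) + (\<Sum>q\<in>P i. m (i, q) * (w q - w (src i)))"
    using assms(2,3) by (auto simp: algebra_simps sum_subtractf sum_distrib_left[symmetric])
  finally show ?thesis .
qed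

lemma
  assumes x: "x \<in> flow_polytope I P d" and fin: "\<And>i. finite (P i)"
    and m_nonneg: "\<And>i q. i \<in> I \<Longrightarrow> q \<in> P i \<Longrightarrow> 0 \<le> m (i, q)"
    and m_le: "\<And>i. i \<in> I \<Longrightarrow> (\<Sum>q\<in>P i. m (i, q)) \<le> x (i, src i)"
  shows reroute_in_flow_polytope: "reroute I P src m x \<in> flow_polytope I P d"
    and flow_load_reroute: "flow_load I P a (reroute I P src m x) j
      = flow_load I P a x j + (\<Sum>i\<in>I. \<Sum>q\<in>P i. m (i, q) * (a i q j - a i (src i) j))"
proof -
  note weighted_sum = reroute_weighted_sum[where I = I and P = P and src = src and m = m and x = x]
  have src: "src i \<in> P i \<or> (\<Sum>r\<in>P i. m (i, r)) = 0" if "i \<in> I" for i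
  proof (cases "src i \<in> P i")
    case False
    then have "(\<Sum>r\<in>P i. m (i, r)) \<le> 0"
      using m_le[OF that] flow_polytope_outside[OF x] that by simp
    then show ?thesis
      using sum_nonneg[of "P i" "\<lambda>r. m (i, r)"] m_nonneg that by force
  qed simp
  have "(\<Sum>q\<in>P i. reroute I P src m x (i, q)) = d i" if "i \<in> I" for i
    using weighted_sum[OF that fin src[OF that], of "\<lambda>_. 1"] x that
    by (simp add: flow_polytope_demand)
  moreover have "0 \<le> reroute I P src m x (i, q)" for i q
  proof (cases "i \<in> I \<and> q \<in> P i")
    case True
    have "(\<Sum>r\<in>P i. m (i, r)) \<le> x (i, q)" if "q = src i"
      using m_le True that by blast
    then show ?thesis
      using True m_nonneg[of i q] flow_polytope_nonneg[OF x, of "(i, q)"] by (auto simp: reroute_def)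
  qed (auto simp: reroute_def)
  moreover have "reroute I P src m x (i, q) = 0" if "(i, q) \<notin> Sigma I P" for i q
    using that by (auto simp: reroute_def)
  ultimately show "reroute I P src m x \<in> flow_polytope I P d"
    unfolding flow_polytope_def by auto
  show "flow_load I P a (reroute I P src m x) j
      = flow_load I P a x j + (\<Sum>i\<in>I. \<Sum>q\<in>P i. m (i, q) * (a i q j - a i (src i) j))"
    unfolding flow_load_def
    using weighted_sum[OF _ fin src] by (simp add: sum.distrib)
qed

lemma reroute_between_paths:
  assumes x: "x \<in> flow_polytope I P d" and "finite I" and fin: "\<And>i. finite (P i)"
    and i: "i \<in> I" "u \<in> P i" "v \<in> P i" and \<epsilon>: "0 \<le> \<epsilon>" "\<epsilon> \<le> x (i, u)"
  defines "y \<equiv> reroute I P (\<lambda>_. u) (\<lambda>k. if k = (i, v) then \<epsilon> else 0) x"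
  shows "y \<in> flow_polytope I P d"
    and "flow_load I P a y j = flow_load I P a x j + \<epsilon> * (a i v j - a i u j)"
proof -
  let ?m = "\<lambda>k. if k = (i, v) then \<epsilon> else 0"
  have mass: "(\<Sum>r\<in>P i'. ?m (i', r) * f r) = (if i' = i then \<epsilon> * f v else 0)" for i' f
    using i(3) fin[of i] by (auto simp: if_distrib[of "\<lambda>m. m * _"] cong: if_cong)
  have "(\<Sum>r\<in>P i'. ?m (i', r)) \<le> x (i', u)" for i'
    using mass[of i' "\<lambda>_. 1"] \<epsilon> flow_polytope_nonneg[OF x] by simp
  then have reroute: "reroute I P (\<lambda>_. u) ?m x \<in> flow_polytope I P d"
    "flow_load I P a (reroute I P (\<lambda>_. u) ?m x) j = flow_load I P a x j +
       (\<Sum>i'\<in>I. \<Sum>r\<in>P i'. ?m (i', r) * (a i' r j - a i' u j))"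
    using \<epsilon>(1) by (intro reroute_in_flow_polytope[OF x fin] flow_load_reroute[OF x fin]; simp)+
  show "y \<in> flow_polytope I P d"
    using reroute(1) by (simp add: y_def)
  show "flow_load I P a y j = flow_load I P a x j + \<epsilon> * (a i v j - a i u j)"
  proof -
    have "(\<Sum>i'\<in>I. \<Sum>r\<in>P i'. ?m (i', r) * (a i' r j - a i' u j)) = \<epsilon> * (a i v j - a i u j)"
      using i(1) \<open>finite I\<close> by (simp only: mass) simp
    then show ?thesis
      using reroute(2) by (simp add: y_def)
  qed
qed

lemma sum_sum_restrict_Sigma:
  assumes "finite I" "\<And>i. finite (P i)" "K \<subseteq> Sigma I P"
  shows "(\<Sum>i\<in>I. \<Sum>q\<in>P i. if (i, q) \<in> K then g (i, q) else 0) = (\<Sum>k\<in>K. g k)"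
proof -
  have "(\<Sum>i\<in>I. \<Sum>q\<in>P i. if (i, q) \<in> K then g (i, q) else 0) = (\<Sum>k\<in>Sigma I P. if k \<in> K then g k else 0)"
    using assms(1,2) by (simp add: sum.Sigma)
  also have "\<dots> = (\<Sum>k\<in>K. g k)"
    using assms by (simp add: sum.If_cases Int_absorb1 finite_subset)
  finally show ?thesis .
qed

lemma exists_small_reroute:
  fixes a :: "'i \<Rightarrow> 'p \<Rightarrow> 'j \<Rightarrow> real"
  assumes fI: "finite I" and fP: "\<And>i. finite (P i)" and x0: "x0 \<in> flow_polytope I P d"
    and src: "\<And>i. i \<in> I \<Longrightarrow> src i \<in> P i" "\<And>i. i \<in> I \<Longrightarrow> 0 < x0 (i, src i)"
    and KS: "K \<subseteq> Sigma I P" and src_notin: "\<And>i. (i, src i) \<notin> K" and \<mu>: "\<forall>k\<in>K. 0 \<le> \<mu> k"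
  shows "\<exists>\<epsilon> y. 0 < \<epsilon> \<and> y \<in> flow_polytope I P d \<and>
    (\<forall>j. flow_load I P a y j
      = flow_load I P a x0 j + \<epsilon> * (\<Sum>k\<in>K. \<mu> k * (a (fst k) (snd k) j - a (fst k) (src (fst k)) j))) \<and>
    (\<forall>k\<in>K. y k = x0 k + \<epsilon> * \<mu> k) \<and> (\<forall>i\<in>I. 0 < y (i, src i))"
proof -
  define x_min where "x_min = Min (insert 1 ((\<lambda>i. x0 (i, src i)) ` I))"
  have x_min: "0 < x_min" "\<And>i. i \<in> I \<Longrightarrow> x_min \<le> x0 (i, src i)"
    using fI src(2) by (auto simp: x_min_def)
  define \<epsilon> where "\<epsilon> = x_min / (2 * (1 + sum \<mu> K))"
  have "0 \<le> sum \<mu> K"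
    using \<mu> by (simp add: sum_nonneg)
  then have \<epsilon>: "0 < \<epsilon>" "\<epsilon> * sum \<mu> K < x_min"
    using x_min(1) by (auto simp: \<epsilon>_def field_simps intro!: add_nonneg_pos)
  define m where "m k = (if k \<in> K then \<epsilon> * \<mu> k else 0)" for k
  have m_sum: "(\<Sum>i\<in>I. \<Sum>q\<in>P i. m (i, q) * g i q) = \<epsilon> * (\<Sum>k\<in>K. \<mu> k * g (fst k) (snd k))" for g
    using sum_sum_restrict_Sigma[OF fI fP KS, of "\<lambda>k. \<epsilon> * \<mu> k * g (fst k) (snd k)"]
    by (simp add: m_def sum_distrib_left mult.assoc if_distrib[of "\<lambda>x. x * _"] cong: if_cong)
  have m_nonneg: "0 \<le> m k" for k
    using \<mu> \<epsilon> by (simp add: m_def)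
  have m_small: "(\<Sum>q\<in>P i. m (i, q)) < x0 (i, src i)" if "i \<in> I" for i
  proof -
    have "(\<Sum>q\<in>P i. m (i, q)) \<le> (\<Sum>i'\<in>I. \<Sum>q\<in>P i'. m (i', q))"
      using that fI m_nonneg by (intro member_le_sum sum_nonneg) auto
    also have "\<dots> = \<epsilon> * sum \<mu> K"
      using m_sum[of "\<lambda>_ _. 1"] by simp
    finally show ?thesis
      using \<epsilon>(2) x_min(2)[OF that] by linarith
  qed
  then have m_le: "(\<Sum>q\<in>P i. m (i, q)) \<le> x0 (i, src i)" if "i \<in> I" for i
    using that less_imp_le by blast
  show ?thesis
  proof (intro exI conjI allI ballI)
    show "0 < \<epsilon>"
      by (fact \<epsilon>(1))
    show "reroute I P src m x0 \<in> flow_polytope I P d"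
      by (rule reroute_in_flow_polytope[OF x0 fP]) (simp_all add: m_nonneg m_le)
    fix j
    show "flow_load I P a (reroute I P src m x0) j
      = flow_load I P a x0 j + \<epsilon> * (\<Sum>k\<in>K. \<mu> k * (a (fst k) (snd k) j - a (fst k) (src (fst k)) j))"
      by (subst flow_load_reroute[OF x0 fP]) (simp_all add: m_nonneg m_le m_sum)
    fix k
    assume "k \<in> K"
    then show "reroute I P src m x0 k = x0 k + \<epsilon> * \<mu> k"
      using KS src_notin[of "fst k"] by (auto simp: reroute_def m_def)
  next
    fix i
    assume "i \<in> I"
    then show "0 < reroute I P src m x0 (i, src i)"
      using src src_notin[of i] m_small by (auto simp: reroute_def m_def)
  qed
qed

section \<open>Gordan's alternative\<close>

lemma slope_nonneg_if_quadratic_nonneg: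
  fixes a b :: real
  assumes "\<And>t. 0 < t \<Longrightarrow> t \<le> 1 \<Longrightarrow> 0 \<le> 2 * t * a + t\<^sup>2 * b"
  shows "0 \<le> a"
proof (rule ccontr)
  assume "\<not> 0 \<le> a"
  define t where "t = min 1 (- a / (\<bar>b\<bar> + 1))"
  have "0 < - a / (\<bar>b\<bar> + 1)"
    using \<open>\<not> 0 \<le> a\<close> by (intro divide_pos_pos) auto
  then have t: "0 < t" "t \<le> 1"
    by (auto simp: t_def)
  have "t * \<bar>b\<bar> \<le> - a / (\<bar>b\<bar> + 1) * \<bar>b\<bar>"
    by (intro mult_right_mono) (auto simp: t_def)
  also have "\<dots> < - a"
    using \<open>\<not> 0 \<le> a\<close> by (simp add: field_simps)
  finally have "t * (2 * a + t * b) < 0"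
    using t \<open>\<not> 0 \<le> a\<close> abs_ge_self[of b] mult_left_mono[of b "\<bar>b\<bar>" t]
    by (intro mult_pos_neg) linarith+
  then show False
    using assms[OF t] by (simp add: power2_eq_square algebra_simps)
qed

definition std_simplex :: "'k set \<Rightarrow> ('k \<Rightarrow> real) set" where
  "std_simplex K = coord_cube K 1 \<inter> {\<mu>. sum \<mu> K = 1}"

lemma compact_std_simplex: "compact (std_simplex K)"
  unfolding std_simplex_def
  by (intro compact_Int_closed compact_coord_cube closed_Collect_eq continuous_intros)

lemma std_simplex_towards_vertex:
  assumes "finite K" "k \<in> K" "m \<in> std_simplex K" "0 \<le> t" "t \<le> 1"
  shows "(\<lambda>k'. (1 - t) * m k' + (if k' = k then t else 0)) \<in> std_simplex K"
proof -
  have "0 \<le> (1 - t) * m k' + (if k' = k then t else 0) \<and> (1 - t) * m k' + (if k' = k then t else 0) \<le> 1"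
    if "k' \<in> K" for k'
    using assms that mult_left_le[of "m k'" "1 - t"] by (auto simp: std_simplex_def coord_cube_def)
  moreover have "(\<Sum>k'\<in>K. (1 - t) * m k' + (if k' = k then t else 0)) = 1"
    using assms by (simp add: std_simplex_def sum.distrib sum_distrib_left[symmetric])
  ultimately show ?thesis
    using assms(2,3) by (auto simp: std_simplex_def coord_cube_def)
qed

text \<open>The first-order condition at the point y of minimal norm in the convex hull of the w k.\<close>
lemma min_norm_combination_inner_ge:
  fixes w :: "'k \<Rightarrow> 'j \<Rightarrow> real"
  assumes "finite K" "k \<in> K" "m \<in> std_simplex K"
    and min: "\<And>\<mu>. \<mu> \<in> std_simplex K \<Longrightarrow>
      (\<Sum>j\<in>J. (\<Sum>k\<in>K. m k * w k j)\<^sup>2) \<le> (\<Sum>j\<in>J. (\<Sum>k\<in>K. \<mu> k * w k j)\<^sup>2)"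
  defines "y \<equiv> \<lambda>j. \<Sum>k\<in>K. m k * w k j"
  shows "(\<Sum>j\<in>J. (y j)\<^sup>2) \<le> (\<Sum>j\<in>J. y j * w k j)"
proof -
  define a where "a = (\<Sum>j\<in>J. y j * (w k j - y j))"
  define b where "b = (\<Sum>j\<in>J. (w k j - y j)\<^sup>2)"
  have "0 \<le> 2 * t * a + t\<^sup>2 * b" if t: "0 < t" "t \<le> 1" for t
  proof -
    define \<mu> where "\<mu> k' = (1 - t) * m k' + (if k' = k then t else 0)" for k'
    have step: "(\<Sum>k'\<in>K. \<mu> k' * w k' j) = y j + t * (w k j - y j)" for j
    proof -
      have "(\<Sum>k'\<in>K. \<mu> k' * w k' j) = (1 - t) * y j + (\<Sum>k'\<in>K. if k' = k then t * w k' j else 0)"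
        unfolding \<mu>_def y_def
        by (simp add: distrib_right sum.distrib sum_distrib_left mult.assoc if_distrib[of "\<lambda>x. x * _"]
            cong: if_cong)
      then show ?thesis
        using assms(1,2) by (simp add: algebra_simps)
    qed
    have "(\<Sum>j\<in>J. (\<Sum>k'\<in>K. \<mu> k' * w k' j)\<^sup>2)
        = (\<Sum>j\<in>J. (y j)\<^sup>2 + 2 * t * (y j * (w k j - y j)) + t\<^sup>2 * (w k j - y j)\<^sup>2)"
      unfolding step by (simp add: power2_eq_square algebra_simps)
    also have "\<dots> = (\<Sum>j\<in>J. (y j)\<^sup>2) + 2 * t * a + t\<^sup>2 * b"
      by (simp add: a_def b_def sum.distrib sum_distrib_left)
    finally have "(\<Sum>j\<in>J. (\<Sum>k'\<in>K. \<mu> k' * w k' j)\<^sup>2) = (\<Sum>j\<in>J. (y j)\<^sup>2) + 2 * t * a + t\<^sup>2 * b" .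
    moreover have "\<mu> \<in> std_simplex K"
      unfolding \<mu>_def using std_simplex_towards_vertex[OF assms(1-3), of t] t by simp
    ultimately show ?thesis
      using min by (fastforce simp: y_def)
  qed
  then have "0 \<le> a"
    by (rule slope_nonneg_if_quadratic_nonneg)
  moreover have "(\<Sum>j\<in>J. y j * w k j) = a + (\<Sum>j\<in>J. (y j)\<^sup>2)"
    by (simp add: a_def power2_eq_square algebra_simps sum.distrib[symmetric])
  ultimately show ?thesis
    by simp
qed

text \<open>Gordan's theorem of the alternative: the point of minimal norm in the convex hull of the w k
  is either 0 or has positive inner product with every w k.\<close>
lemma gordan_alternative:
  fixes w :: "'k \<Rightarrow> 'j \<Rightarrow> real"
  assumes "finite K" "finite J"
  shows "(\<exists>lam. \<forall>k\<in>K. 0 < (\<Sum>j\<in>J. lam j * w k j)) \<or>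
    (\<exists>\<mu>. (\<forall>k\<in>K. 0 \<le> \<mu> k) \<and> sum \<mu> K = 1 \<and> (\<forall>j\<in>J. (\<Sum>k\<in>K. \<mu> k * w k j) = 0))"
proof (cases "K = {}")
  case False
  define sqnorm where "sqnorm \<mu> = (\<Sum>j\<in>J. (\<Sum>k\<in>K. \<mu> k * w k j)\<^sup>2)" for \<mu>
  obtain k0 where "k0 \<in> K"
    using False by blast
  then have "(\<lambda>k. if k = k0 then 1 else 0) \<in> std_simplex K"
    using assms(1) by (auto simp: std_simplex_def coord_cube_def)
  moreover have "continuous_on (std_simplex K) sqnorm"
    unfolding sqnorm_def by (intro continuous_intros)
  ultimately obtain m where m: "m \<in> std_simplex K" and min: "\<And>\<mu>. \<mu> \<in> std_simplex K \<Longrightarrow> sqnorm m \<le> sqnorm \<mu>"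
    using continuous_attains_inf[OF compact_std_simplex] by blast
  define y where "y j = (\<Sum>k\<in>K. m k * w k j)" for j
  show ?thesis
  proof (cases "\<forall>j\<in>J. y j = 0")
    case True
    then show ?thesis
      using m by (auto simp: std_simplex_def coord_cube_def y_def)
  next
    case False
    then obtain j0 where j0: "j0 \<in> J" "y j0 \<noteq> 0"
      by blast
    have "0 < (\<Sum>j\<in>J. (y j)\<^sup>2)"
      by (rule sum_pos2[OF assms(2) j0(1)]) (use j0 in auto)
    then have "0 < (\<Sum>j\<in>J. y j * w k j)" if "k \<in> K" for k
      using min_norm_combination_inner_ge[OF assms(1) that m, where J = J and w = w] min
      by (fastforce simp: sqnorm_def y_def)
    then show ?thesis
      by blast
  qed
qed simp

lemma gordan_alternative_positive:
  fixes w :: "'k \<Rightarrow> 'j \<Rightarrow> real"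
  assumes "finite K" "finite J"
  shows "(\<exists>lam. (\<forall>j\<in>J. 0 < lam j) \<and> (\<forall>k\<in>K. 0 < (\<Sum>j\<in>J. lam j * w k j))) \<or>
    (\<exists>\<mu> \<nu>. (\<forall>k\<in>K. 0 \<le> \<mu> k) \<and> (\<forall>j\<in>J. 0 \<le> \<nu> j) \<and> sum \<mu> K + sum \<nu> J = 1 \<and>
      (\<forall>j\<in>J. (\<Sum>k\<in>K. \<mu> k * w k j) + \<nu> j = 0))"
proof -
  define w' where "w' = case_sum w (\<lambda>j' j. if j = j' then 1 else 0 :: real)"
  have split: "(\<Sum>k\<in>Inl ` K \<union> Inr ` J. f k) = (\<Sum>k\<in>K. f (Inl k)) + (\<Sum>j\<in>J. f (Inr j))"
    for f :: "'k + 'j \<Rightarrow> real"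
    using assms by (subst sum.union_disjoint) (auto simp: sum.reindex)
  have unit: "(\<Sum>j\<in>J. c j * w' (Inr j') j) = c j'" if "j' \<in> J" for c :: "'j \<Rightarrow> real" and j'
    using that assms(2) by (simp add: w'_def if_distrib[of "(*) _"] cong: if_cong)
  have unit': "(\<Sum>j'\<in>J. c j' * w' (Inr j') j) = c j" if "j \<in> J" for c :: "'j \<Rightarrow> real" and j
    using that assms(2) by (simp add: w'_def if_distrib[of "(*) _"] cong: if_cong)
  have "finite (Inl ` K \<union> Inr ` J)"
    using assms by simp
  from gordan_alternative[OF this assms(2), of w'] show ?thesis
  proof (elim disjE exE conjE)
    fix lam
    assume A: "\<forall>k\<in>Inl ` K \<union> Inr ` J. 0 < (\<Sum>j\<in>J. lam j * w' k j)"
    then have "0 < lam j" if "j \<in> J" for j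
      using A[THEN bspec, of "Inr j"] unit[OF that, of lam] that by simp
    moreover have "0 < (\<Sum>j\<in>J. lam j * w k j)" if "k \<in> K" for k
      using A[THEN bspec, of "Inl k"] that by (simp add: w'_def)
    ultimately show ?thesis
      by blast
  next
    fix \<mu>
    assume "\<forall>k\<in>Inl ` K \<union> Inr ` J. 0 \<le> \<mu> k" "sum \<mu> (Inl ` K \<union> Inr ` J) = 1"
      and "\<forall>j\<in>J. (\<Sum>k\<in>Inl ` K \<union> Inr ` J. \<mu> k * w' k j) = 0"
    then show ?thesis
      using unit'[of _ "\<lambda>j. \<mu> (Inr j)"]
      by (intro disjI2 exI[of _ "\<mu> \<circ> Inl"] exI[of _ "\<mu> \<circ> Inr"]) (auto simp: split w'_def)
  qed
qed

section \<open>Pareto-minimal extremal loads are strictly implementable\<close>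

lemma used_paths_same_load:
  assumes "finite I" "\<And>i. finite (P i)" and y: "y \<in> flow_polytope I P d"
    and load_y: "\<forall>j\<in>J. flow_load I P a y j = B j"
    and extremal: "\<And>y1 y2. y1 \<in> flow_polytope I P d \<Longrightarrow> y2 \<in> flow_polytope I P d \<Longrightarrow>
      \<forall>j\<in>J. B j = (flow_load I P a y1 j + flow_load I P a y2 j) / 2 \<Longrightarrow>
      \<forall>j\<in>J. flow_load I P a y1 j = flow_load I P a y2 j"
    and i: "i \<in> I" "p \<in> P i" "q \<in> P i" and used: "0 < y (i, p)" "0 < y (i, q)" and "j \<in> J"
  shows "a i p j = a i q j"
proof -
  define \<epsilon> where "\<epsilon> = min (y (i, p)) (y (i, q))"
  have \<epsilon>: "0 < \<epsilon>" "\<epsilon> \<le> y (i, p)" "\<epsilon> \<le> y (i, q)"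
    using used by (auto simp: \<epsilon>_def)
  note to_q = reroute_between_paths[OF y assms(1,2) i(1,2,3) less_imp_le[OF \<epsilon>(1)] \<epsilon>(2)]
  note to_p = reroute_between_paths[OF y assms(1,2) i(1,3,2) less_imp_le[OF \<epsilon>(1)] \<epsilon>(3)]
  have "\<forall>j\<in>J. flow_load I P a (reroute I P (\<lambda>_. p) (\<lambda>k. if k = (i, q) then \<epsilon> else 0) y) j
      = flow_load I P a (reroute I P (\<lambda>_. q) (\<lambda>k. if k = (i, p) then \<epsilon> else 0) y) j"
    using to_q(1) to_p(1) by (rule extremal) (use load_y in \<open>simp add: to_q(2) to_p(2) field_simps\<close>)
  then show ?thesis
    using \<open>j \<in> J\<close> \<epsilon>(1) by (simp add: to_q(2) to_p(2) algebra_simps)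
qed

text \<open>Pareto-minimality rules out moving flow onto paths with other externalities in a way that
  decreases some load, and extremality rules out doing so without changing the loads.\<close>
lemma dual_certificate_trivial:
  fixes a :: "'i \<Rightarrow> 'p \<Rightarrow> 'j \<Rightarrow> real"
  assumes fI: "finite I" and fP: "\<And>i. finite (P i)" and x0: "x0 \<in> flow_polytope I P d"
    and src: "\<And>i. i \<in> I \<Longrightarrow> src i \<in> P i" "\<And>i. i \<in> I \<Longrightarrow> 0 < x0 (i, src i)"
    and x0B: "\<forall>j\<in>J. flow_load I P a x0 j = B j"
    and pareto: "\<And>y. y \<in> flow_polytope I P d \<Longrightarrow> \<forall>j\<in>J. flow_load I P a y j \<le> B j \<Longrightarrow>
      \<forall>j\<in>J. flow_load I P a y j = B j"
    and extremal: "\<And>y1 y2. y1 \<in> flow_polytope I P d \<Longrightarrow> y2 \<in> flow_polytope I P d \<Longrightarrow>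
      \<forall>j\<in>J. B j = (flow_load I P a y1 j + flow_load I P a y2 j) / 2 \<Longrightarrow>
      \<forall>j\<in>J. flow_load I P a y1 j = flow_load I P a y2 j"
  defines "K \<equiv> {(i, q) \<in> Sigma I P. \<exists>j\<in>J. a i q j \<noteq> a i (src i) j}"
  assumes \<mu>: "\<forall>k\<in>K. 0 \<le> \<mu> k" and \<nu>: "\<forall>j\<in>J. 0 \<le> \<nu> j"
    and balance: "\<forall>j\<in>J. (\<Sum>k\<in>K. \<mu> k * (a (fst k) (snd k) j - a (fst k) (src (fst k)) j)) + \<nu> j = 0"
  shows "(\<forall>k\<in>K. \<mu> k = 0) \<and> (\<forall>j\<in>J. \<nu> j = 0)"
proof -
  have KS: "K \<subseteq> Sigma I P" and src_notin: "\<And>i. (i, src i) \<notin> K"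
    by (auto simp: K_def)
  obtain \<epsilon> y where \<epsilon>: "0 < \<epsilon>" and y: "y \<in> flow_polytope I P d"
    and load_y: "\<And>j. flow_load I P a y j
      = flow_load I P a x0 j + \<epsilon> * (\<Sum>k\<in>K. \<mu> k * (a (fst k) (snd k) j - a (fst k) (src (fst k)) j))"
    and y_K: "\<And>k. k \<in> K \<Longrightarrow> y k = x0 k + \<epsilon> * \<mu> k" and y_src: "\<And>i. i \<in> I \<Longrightarrow> 0 < y (i, src i)"
    using exists_small_reroute[where a = a, OF fI fP x0 src KS src_notin \<mu>] by blast
  have load_y': "flow_load I P a y j = B j - \<epsilon> * \<nu> j" if "j \<in> J" for j
    using load_y[of j] balance x0B that by (simp add: eq_neg_iff_add_eq_0[symmetric])
  then have yB: "\<forall>j\<in>J. flow_load I P a y j = B j"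
    using pareto[OF y] \<nu> \<epsilon> by simp
  then have \<nu>0: "\<forall>j\<in>J. \<nu> j = 0"
    using load_y' \<epsilon> by simp
  have "\<mu> k = 0" if k: "k \<in> K" for k
  proof (rule ccontr)
    assume "\<mu> k \<noteq> 0"
    then have "0 < \<mu> k"
      using \<mu> k by force
    obtain i q where iq: "k = (i, q)" "i \<in> I" "q \<in> P i" and differs: "\<exists>j\<in>J. a i q j \<noteq> a i (src i) j"
      using k by (auto simp: K_def)
    have "0 < y (i, q)"
      using y_K[OF k] iq(1) flow_polytope_nonneg[OF x0, of k] mult_pos_pos[OF \<epsilon> \<open>0 < \<mu> k\<close>] by simp
    then have "\<forall>j\<in>J. a i q j = a i (src i) j"
      using used_paths_same_load[OF fI fP y yB extremal iq(2,3) src(1)[OF iq(2)]] y_src[OF iq(2)]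
      by blast
    then show False
      using differs by blast
  qed
  then show ?thesis
    using \<nu>0 by blast
qed

lemma exists_separating_weights:
  fixes a :: "'i \<Rightarrow> 'p \<Rightarrow> 'j \<Rightarrow> real"
  assumes fI: "finite I" and fJ: "finite J" and fP: "\<And>i. finite (P i)" and x0: "x0 \<in> flow_polytope I P d"
    and src: "\<And>i. i \<in> I \<Longrightarrow> src i \<in> P i" "\<And>i. i \<in> I \<Longrightarrow> 0 < x0 (i, src i)"
    and x0B: "\<forall>j\<in>J. flow_load I P a x0 j = B j"
    and pareto: "\<And>y. y \<in> flow_polytope I P d \<Longrightarrow> \<forall>j\<in>J. flow_load I P a y j \<le> B j \<Longrightarrow>
      \<forall>j\<in>J. flow_load I P a y j = B j"
    and extremal: "\<And>y1 y2. y1 \<in> flow_polytope I P d \<Longrightarrow> y2 \<in> flow_polytope I P d \<Longrightarrow>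
      \<forall>j\<in>J. B j = (flow_load I P a y1 j + flow_load I P a y2 j) / 2 \<Longrightarrow>
      \<forall>j\<in>J. flow_load I P a y1 j = flow_load I P a y2 j"
  obtains lam where "\<forall>j\<in>J. 0 < lam j"
    and "\<And>i q. i \<in> I \<Longrightarrow> q \<in> P i \<Longrightarrow> \<exists>j\<in>J. a i q j \<noteq> a i (src i) j \<Longrightarrow>
      (\<Sum>j\<in>J. lam j * a i (src i) j) < (\<Sum>j\<in>J. lam j * a i q j)"
proof -
  define K where "K = {(i, q) \<in> Sigma I P. \<exists>j\<in>J. a i q j \<noteq> a i (src i) j}"
  define w where "w k j = a (fst k) (snd k) j - a (fst k) (src (fst k)) j" for k j
  have "finite K"
    using fI fP by (auto simp: K_def intro: finite_subset[of _ "Sigma I P"])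
  from gordan_alternative_positive[OF this fJ, of w] show thesis
  proof (elim disjE exE conjE)
    fix lam
    assume pos: "\<forall>j\<in>J. 0 < lam j" and sep: "\<forall>k\<in>K. 0 < (\<Sum>j\<in>J. lam j * w k j)"
    show thesis
    proof (rule that[OF pos])
      fix i q
      assume "i \<in> I" "q \<in> P i" "\<exists>j\<in>J. a i q j \<noteq> a i (src i) j"
      then have "0 < (\<Sum>j\<in>J. lam j * w (i, q) j)"
        using sep by (auto simp: K_def)
      then show "(\<Sum>j\<in>J. lam j * a i (src i) j) < (\<Sum>j\<in>J. lam j * a i q j)"
        by (simp add: w_def right_diff_distrib sum_subtractf)
    qed
  next
    fix \<mu> \<nu>
    assume \<mu>: "\<forall>k\<in>K. 0 \<le> \<mu> k" and \<nu>: "\<forall>j\<in>J. 0 \<le> \<nu> j" and total: "sum \<mu> K + sum \<nu> J = 1"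
      and balance: "\<forall>j\<in>J. (\<Sum>k\<in>K. \<mu> k * w k j) + \<nu> j = 0"
    have "(\<forall>k\<in>K. \<mu> k = 0) \<and> (\<forall>j\<in>J. \<nu> j = 0)"
      using dual_certificate_trivial[OF fI fP x0 src x0B pareto extremal \<mu>[unfolded K_def] \<nu>
          balance[unfolded K_def w_def]]
      unfolding K_def .
    then show thesis
      using total by simp
  qed
qed

lemma flow_load_eq_if_used_paths_agree:
  assumes u: "u \<in> flow_polytope I P d"
    and agree: "\<And>i p. i \<in> I \<Longrightarrow> p \<in> P i \<Longrightarrow> 0 < u (i, p) \<Longrightarrow> a i p j = v i"
  shows "flow_load I P a u j = (\<Sum>i\<in>I. v i * d i)"
  unfolding flow_load_def
proof (rule sum.cong[OF refl])
  fix i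
  assume i: "i \<in> I"
  have "a i p j * u (i, p) = v i * u (i, p)" if "p \<in> P i" for p
    using agree[OF i that] flow_polytope_nonneg[OF u, of "(i, p)"] by (cases "0 < u (i, p)") auto
  then have "(\<Sum>p\<in>P i. a i p j * u (i, p)) = v i * (\<Sum>p\<in>P i. u (i, p))"
    unfolding sum_distrib_left by (rule sum.cong[OF refl])
  then show "(\<Sum>p\<in>P i. a i p j * u (i, p)) = v i * d i"
    using u i by (simp add: flow_polytope_demand)
qed

lemma continuous_family_bounded:
  fixes f :: "'a \<Rightarrow> 'b::topological_space \<Rightarrow> real"
  assumes "finite A" "compact S" "\<And>a. a \<in> A \<Longrightarrow> continuous_on S (f a)"
  shows "\<exists>T. \<forall>a\<in>A. \<forall>x\<in>S. \<bar>f a x\<bar> \<le> T"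
proof -
  have "\<exists>T. \<forall>x\<in>S. \<bar>f a x\<bar> \<le> T" if "a \<in> A" for a
    using compact_imp_bounded[OF compact_continuous_image[OF assms(3)[OF that] assms(2)]]
    by (auto simp: bounded_real)
  then obtain T where T: "\<And>a x. a \<in> A \<Longrightarrow> x \<in> S \<Longrightarrow> \<bar>f a x\<bar> \<le> T a"
    by metis
  have "\<bar>f a x\<bar> \<le> Max (T ` A)" if "a \<in> A" "x \<in> S" for a x
  proof -
    have "T a \<le> Max (T ` A)"
      using assms(1) that(1) by simp
    then show ?thesis
      using T[OF that] by linarith
  qed
  then show ?thesis
    by blast
qed

lemma exists_dominating_multiplier:
  fixes f :: "'a \<Rightarrow> real"
  assumes "finite A" "\<And>a. a \<in> A \<Longrightarrow> 0 < f a"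
  shows "\<exists>M>0. \<forall>a\<in>A. C < M * f a"
proof -
  define \<delta> where "\<delta> = Min (insert 1 (f ` A))"
  have \<delta>: "0 < \<delta>" "\<And>a. a \<in> A \<Longrightarrow> \<delta> \<le> f a"
    using assms by (auto simp: \<delta>_def)
  define M where "M = (\<bar>C\<bar> + 1) / \<delta>"
  have "0 < M"
    using \<delta>(1) by (simp add: M_def)
  moreover have "C < M * f a" if "a \<in> A" for a
  proof -
    have "C < M * \<delta>"
      using \<delta>(1) by (simp add: M_def)
    also have "\<dots> \<le> M * f a"
      using \<delta>(2)[OF that] \<open>0 < M\<close> by simp
    finally show ?thesis .
  qed
  ultimately show ?thesis
    by blast
qed

lemma flow_polytope_used_paths:
  assumes "x \<in> flow_polytope I P d" "\<And>i. i \<in> I \<Longrightarrow> 0 < d i"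
  obtains src where "\<And>i. i \<in> I \<Longrightarrow> src i \<in> P i" "\<And>i. i \<in> I \<Longrightarrow> 0 < x (i, src i)"
proof -
  have "\<forall>i\<in>I. \<exists>p. p \<in> P i \<and> 0 < x (i, p)"
    using flow_polytope_used_path[OF assms(1) _ assms(2)] by metis
  then show thesis
    using that by metis
qed

lemma large_weights_restrict_equilibria:
  fixes a :: "'i \<Rightarrow> 'p \<Rightarrow> 'j \<Rightarrow> real" and \<tau> :: "'i \<Rightarrow> 'p \<Rightarrow> ('i \<times> 'p \<Rightarrow> real) \<Rightarrow> real"
  assumes fI: "finite I" and fP: "\<And>i. finite (P i)"
    and \<tau>: "\<And>i p. i \<in> I \<Longrightarrow> p \<in> P i \<Longrightarrow> continuous_on (flow_polytope I P d) (\<tau> i p)"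
    and src: "\<And>i. i \<in> I \<Longrightarrow> src i \<in> P i"
    and separates: "\<And>i q. i \<in> I \<Longrightarrow> q \<in> P i \<Longrightarrow> \<exists>j\<in>J. a i q j \<noteq> a i (src i) j \<Longrightarrow>
      (\<Sum>j\<in>J. \<omega> j * a i (src i) j) < (\<Sum>j\<in>J. \<omega> j * a i q j)"
  shows "\<exists>M>0. \<forall>u i p. wardrop_equilibrium I P d (\<lambda>i p x. \<tau> i p x + (\<Sum>j\<in>J. M * \<omega> j * a i p j)) u \<longrightarrow>
    i \<in> I \<longrightarrow> p \<in> P i \<longrightarrow> 0 < u (i, p) \<longrightarrow> (\<forall>j\<in>J. a i p j = a i (src i) j)"
proof -
  let ?F = "flow_polytope I P d"
  have "finite (Sigma I P)"
    using fI fP by simp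
  then have "\<exists>T. \<forall>ip\<in>Sigma I P. \<forall>x\<in>?F. \<bar>\<tau> (fst ip) (snd ip) x\<bar> \<le> T"
    using compact_flow_polytope[OF fI fP] by (rule continuous_family_bounded) (use \<tau> in auto)
  then obtain T where T: "\<And>ip x. ip \<in> Sigma I P \<Longrightarrow> x \<in> ?F \<Longrightarrow> \<bar>\<tau> (fst ip) (snd ip) x\<bar> \<le> T"
    by blast
  define D where "D = {(i, q) \<in> Sigma I P. \<exists>j\<in>J. a i q j \<noteq> a i (src i) j}"
  define gap where "gap ip = (\<Sum>j\<in>J. \<omega> j * a (fst ip) (snd ip) j)
      - (\<Sum>j\<in>J. \<omega> j * a (fst ip) (src (fst ip)) j)" for ip
  have "finite D"
    using \<open>finite (Sigma I P)\<close> by (rule finite_subset[rotated]) (auto simp: D_def)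
  moreover have "0 < gap ip" if ip: "ip \<in> D" for ip
  proof -
    obtain i q where "ip = (i, q)" "i \<in> I" "q \<in> P i" "\<exists>j\<in>J. a i q j \<noteq> a i (src i) j"
      using ip by (auto simp: D_def)
    then show ?thesis
      using separates by (simp add: gap_def)
  qed
  ultimately have "\<exists>M>0. \<forall>ip\<in>D. 2 * T < M * gap ip"
    by (rule exists_dominating_multiplier)
  then obtain M where M: "0 < M" "\<And>ip. ip \<in> D \<Longrightarrow> 2 * T < M * gap ip"
    by blast
  let ?c = "\<lambda>i p x. \<tau> i p x + (\<Sum>j\<in>J. M * \<omega> j * a i p j)"
  have "\<forall>j\<in>J. a i p j = a i (src i) j"
    if u: "wardrop_equilibrium I P d ?c u" and i: "i \<in> I" "p \<in> P i" and used: "0 < u (i, p)" for u i p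
  proof (rule ccontr)
    assume "\<not> (\<forall>j\<in>J. a i p j = a i (src i) j)"
    then have "(i, p) \<in> D"
      using i by (auto simp: D_def)
    have uF: "u \<in> ?F"
      using u by (simp add: wardrop_equilibrium_def)
    have "?c i p u \<le> ?c i (src i) u"
      using u i used src[OF i(1)] unfolding wardrop_equilibrium_def by blast
    moreover have "?c i p u - ?c i (src i) u = \<tau> i p u - \<tau> i (src i) u + M * gap (i, p)"
      by (simp add: gap_def sum_distrib_left right_diff_distrib mult.assoc)
    moreover have "\<bar>\<tau> i p u\<bar> \<le> T" "\<bar>\<tau> i (src i) u\<bar> \<le> T"
      using T[OF _ uF, of "(i, p)"] T[OF _ uF, of "(i, src i)"] i src[OF i(1)] by auto
    ultimately show False
      using M(2)[OF \<open>(i, p) \<in> D\<close>] by linarith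
  qed
  then show ?thesis
    using M(1) by blast
qed

lemma pareto_extremal_load_strictly_implementable:
  fixes a :: "'i \<Rightarrow> 'p \<Rightarrow> 'j \<Rightarrow> real" and \<tau> :: "'i \<Rightarrow> 'p \<Rightarrow> ('i \<times> 'p \<Rightarrow> real) \<Rightarrow> real"
  assumes fI: "finite I" and fJ: "finite J" and fP: "\<And>i. finite (P i)" and d: "\<And>i. i \<in> I \<Longrightarrow> 0 < d i"
    and \<tau>: "\<And>i p. i \<in> I \<Longrightarrow> p \<in> P i \<Longrightarrow> continuous_on (flow_polytope I P d) (\<tau> i p)"
    and feasible: "\<exists>x\<in>flow_polytope I P d. \<forall>j\<in>J. flow_load I P a x j \<le> B j"
    and pareto: "\<And>y. y \<in> flow_polytope I P d \<Longrightarrow> \<forall>j\<in>J. flow_load I P a y j \<le> B j \<Longrightarrow>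
      \<forall>j\<in>J. flow_load I P a y j = B j"
    and extremal: "\<And>y1 y2. y1 \<in> flow_polytope I P d \<Longrightarrow> y2 \<in> flow_polytope I P d \<Longrightarrow>
      \<forall>j\<in>J. B j = (flow_load I P a y1 j + flow_load I P a y2 j) / 2 \<Longrightarrow>
      \<forall>j\<in>J. flow_load I P a y1 j = flow_load I P a y2 j"
  shows "\<exists>lam. (\<forall>j\<in>J. 0 < lam j) \<and>
    (\<exists>u. wardrop_equilibrium I P d (\<lambda>i p x. \<tau> i p x + (\<Sum>j\<in>J. lam j * a i p j)) u) \<and>
    (\<forall>u. wardrop_equilibrium I P d (\<lambda>i p x. \<tau> i p x + (\<Sum>j\<in>J. lam j * a i p j)) u \<longrightarrow>
      (\<forall>j\<in>J. flow_load I P a u j = B j))"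
proof -
  obtain x0 where x0: "x0 \<in> flow_polytope I P d" and "\<forall>j\<in>J. flow_load I P a x0 j \<le> B j"
    using feasible by blast
  then have x0B: "\<forall>j\<in>J. flow_load I P a x0 j = B j"
    by (rule pareto)
  obtain src where src: "\<And>i. i \<in> I \<Longrightarrow> src i \<in> P i" "\<And>i. i \<in> I \<Longrightarrow> 0 < x0 (i, src i)"
    using flow_polytope_used_paths[OF x0 d] by blast
  obtain lam0 where lam0: "\<forall>j\<in>J. 0 < lam0 j"
    and separates: "\<And>i q. i \<in> I \<Longrightarrow> q \<in> P i \<Longrightarrow> \<exists>j\<in>J. a i q j \<noteq> a i (src i) j \<Longrightarrow>
      (\<Sum>j\<in>J. lam0 j * a i (src i) j) < (\<Sum>j\<in>J. lam0 j * a i q j)"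
    using exists_separating_weights[OF fI fJ fP x0 src x0B pareto extremal] by blast
  obtain M where "0 < M" and minimal: "\<And>u i p.
      wardrop_equilibrium I P d (\<lambda>i p x. \<tau> i p x + (\<Sum>j\<in>J. M * lam0 j * a i p j)) u \<Longrightarrow>
      i \<in> I \<Longrightarrow> p \<in> P i \<Longrightarrow> 0 < u (i, p) \<Longrightarrow> \<forall>j\<in>J. a i p j = a i (src i) j"
    using large_weights_restrict_equilibria[where a = a and \<omega> = lam0 and J = J and \<tau> = \<tau> and src = src,
        OF fI fP \<tau> src(1) separates]
    by blast
  let ?c = "\<lambda>i p x. \<tau> i p x + (\<Sum>j\<in>J. M * lam0 j * a i p j)"
  show ?thesis
  proof (rule exI[of _ "\<lambda>j. M * lam0 j"], intro conjI allI impI)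
    show "\<forall>j\<in>J. 0 < M * lam0 j"
      using lam0 \<open>0 < M\<close> by simp
    show "\<exists>u. wardrop_equilibrium I P d ?c u"
    proof (rule wardrop_equilibrium_exists[OF fI fP d])
      show "P i \<noteq> {}" if "i \<in> I" for i
        using src(1)[OF that] by blast
    qed (use \<tau> in \<open>auto intro!: continuous_intros\<close>)
    fix u
    assume u: "wardrop_equilibrium I P d ?c u"
    show "\<forall>j\<in>J. flow_load I P a u j = B j"
    proof
      fix j
      assume j: "j \<in> J"
      have uF: "u \<in> flow_polytope I P d"
        using u by (simp add: wardrop_equilibrium_def)
      have x0_agree: "a i p j = a i (src i) j" if "i \<in> I" "p \<in> P i" "0 < x0 (i, p)" for i p
        using used_paths_same_load[OF fI fP x0 x0B extremal that(1,2) src(1)[OF that(1)] that(3)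
            src(2)[OF that(1)] j] .
      have "flow_load I P a u j = (\<Sum>i\<in>I. a i (src i) j * d i)"
        by (rule flow_load_eq_if_used_paths_agree[OF uF]) (use minimal[OF u] j in blast)
      also have "\<dots> = flow_load I P a x0 j"
        by (rule flow_load_eq_if_used_paths_agree[where a = a and v = "\<lambda>i. a i (src i) j",
              OF x0 x0_agree, symmetric])
      finally show "flow_load I P a u j = B j"
        using x0B j by simp
    qed
  qed
qed

section \<open>Path flows in a graph\<close>

lemma Pidx_eq_Sigma: "Pidx V E s t I = Sigma I (paths V E s t)"
  by (auto simp: Pidx_def)

lemma feasible_flows_eq_flow_polytope:
  "feasible_flows V E s t I d = flow_polytope I (paths V E s t) d"
  by (simp add: feasible_flows_def flow_polytope_def Pidx_eq_Sigma)

lemma finite_paths: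
  assumes "finite V"
  shows "finite (paths V E s t i)"
proof -
  have "paths V E s t i \<subseteq> {p. set p \<subseteq> V \<and> distinct p}"
    by (auto simp: paths_def simple_path_def)
  then show ?thesis
    using finite_subset_distinct[OF assms] finite_subset by blast
qed

context
  fixes V :: "'v set" and E s t and I :: "'i set" and d J
    and g :: "'i \<Rightarrow> 'v list \<Rightarrow> 'j \<Rightarrow> ('i \<times> 'v list \<Rightarrow> real) \<Rightarrow> real"
    and a :: "'i \<Rightarrow> 'v list \<Rightarrow> 'j \<Rightarrow> real"
  assumes finite_V: "finite V" and finite_I: "finite I"
    and g_eq_a: "\<And>x i p j. x \<in> feasible_flows V E s t I d \<Longrightarrow> i \<in> I \<Longrightarrow> p \<in> paths V E s t i \<Longrightarrow> j \<in> J \<Longrightarrow>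
      g i p j x = a i p j"
    and nonneg: "\<And>i p j. i \<in> I \<Longrightarrow> p \<in> paths V E s t i \<Longrightarrow> j \<in> J \<Longrightarrow> 0 \<le> a i p j"
begin

lemma Gext_eq_flow_load:
  assumes "x \<in> feasible_flows V E s t I d" "j \<in> J"
  shows "Gext V E s t I g j x = flow_load I (paths V E s t) a x j"
proof -
  have "Gext V E s t I g j x = (\<Sum>(i, p)\<in>Sigma I (paths V E s t). g i p j x * x (i, p))"
    by (simp add: Gext_def Pidx_eq_Sigma)
  also have "\<dots> = (\<Sum>i\<in>I. \<Sum>p\<in>paths V E s t i. g i p j x * x (i, p))"
    by (rule sum.Sigma[symmetric]) (use finite_I finite_paths[OF finite_V] in auto)
  also have "\<dots> = flow_load I (paths V E s t) a x j"
    using g_eq_a assms by (simp add: flow_load_def)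
  finally show ?thesis .
qed

lemma flow_load_nonneg:
  "x \<in> flow_polytope I (paths V E s t) d \<Longrightarrow> j \<in> J \<Longrightarrow> 0 \<le> flow_load I (paths V E s t) a x j"
  unfolding flow_load_def using nonneg flow_polytope_nonneg by (intro sum_nonneg mult_nonneg_nonneg) auto

lemma WE_eq_wardrop_equilibrium:
  "WE V E s t I d J \<tau> g lam
    = Collect (wardrop_equilibrium I (paths V E s t) d (\<lambda>i p x. \<tau> i p x + (\<Sum>j\<in>J. lam j * a i p j)))"
  unfolding WE_def wardrop_equilibrium_def gcost_def feasible_flows_eq_flow_polytope[symmetric]
  using g_eq_a by auto

lemma flow_load_budget_feasible:
  assumes "y \<in> flow_polytope I (paths V E s t) d"
  shows "feasible_budget V E s t I d J g (\<lambda>j. if j \<in> J then flow_load I (paths V E s t) a y j else 0)"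
  using assms flow_load_nonneg Gext_eq_flow_load
  by (auto simp: feasible_budget_def feasible_flows_eq_flow_polytope intro!: bexI[of _ y])

lemma pareto_minimal_flow_loadD:
  assumes "pareto_minimal V E s t I d J g B" "y \<in> flow_polytope I (paths V E s t) d"
    and "\<forall>j\<in>J. flow_load I (paths V E s t) a y j \<le> B j"
  shows "\<forall>j\<in>J. flow_load I (paths V E s t) a y j = B j"
proof -
  let ?B' = "\<lambda>j. if j \<in> J then flow_load I (paths V E s t) a y j else 0"
  have "?B' = B"
    using assms flow_load_budget_feasible[OF assms(2)] unfolding pareto_minimal_def by auto
  then show ?thesis
    by (metis (mono_tags, lifting))
qed

lemma extremal_flow_loadD:
  assumes "extremal V E s t I d J g B"
    and "y1 \<in> flow_polytope I (paths V E s t) d" "y2 \<in> flow_polytope I (paths V E s t) d"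
    and "\<forall>j\<in>J. B j = (flow_load I (paths V E s t) a y1 j + flow_load I (paths V E s t) a y2 j) / 2"
  shows "\<forall>j\<in>J. flow_load I (paths V E s t) a y1 j = flow_load I (paths V E s t) a y2 j"
proof -
  let ?B1 = "\<lambda>j. if j \<in> J then flow_load I (paths V E s t) a y1 j else 0"
  let ?B2 = "\<lambda>j. if j \<in> J then flow_load I (paths V E s t) a y2 j else 0"
  have "B = (\<lambda>j. 1 / 2 * ?B1 j + (1 - 1 / 2) * ?B2 j)"
  proof
    fix j
    show "B j = 1 / 2 * ?B1 j + (1 - 1 / 2) * ?B2 j"
      using assms(1,4) by (cases "j \<in> J") (auto simp: extremal_def feasible_budget_def)
  qed
  moreover have "0 < (1 / 2 :: real)" "(1 / 2 :: real) < 1"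
    by simp_all
  ultimately have "?B1 = ?B2"
    using assms(1) flow_load_budget_feasible[OF assms(2)] flow_load_budget_feasible[OF assms(3)]
    unfolding extremal_def by blast
  then show ?thesis
    by (metis (mono_tags, lifting))
qed

lemma extremal_pareto_minimal_strictly_implementable:
  assumes "finite J" "\<forall>i\<in>I. d i > 0"
    and "\<forall>i\<in>I. \<forall>p\<in>paths V E s t i. continuous_on (feasible_flows V E s t I d) (\<tau> i p)"
    and extremal: "extremal V E s t I d J g B" and pareto: "pareto_minimal V E s t I d J g B"
  shows "\<exists>lam :: 'j \<Rightarrow> real. (\<forall>j\<in>J. lam j > 0) \<and> WE V E s t I d J \<tau> g lam \<noteq> {} \<and>
           (\<forall>u\<in>WE V E s t I d J \<tau> g lam. \<forall>j\<in>J. Gext V E s t I g j u \<le> B j)"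
proof -
  let ?P = "paths V E s t"
  have "\<exists>x\<in>flow_polytope I ?P d. \<forall>j\<in>J. flow_load I ?P a x j \<le> B j"
    using extremal Gext_eq_flow_load
    by (auto simp: extremal_def feasible_budget_def feasible_flows_eq_flow_polytope)
  moreover have "\<And>i. i \<in> I \<Longrightarrow> 0 < d i"
    and "\<And>i p. i \<in> I \<Longrightarrow> p \<in> ?P i \<Longrightarrow> continuous_on (flow_polytope I ?P d) (\<tau> i p)"
    using assms(2,3) by (simp_all add: feasible_flows_eq_flow_polytope)
  ultimately obtain lam where "\<forall>j\<in>J. 0 < lam j"
    and "\<exists>u. wardrop_equilibrium I ?P d (\<lambda>i p x. \<tau> i p x + (\<Sum>j\<in>J. lam j * a i p j)) u"
    and "\<forall>u. wardrop_equilibrium I ?P d (\<lambda>i p x. \<tau> i p x + (\<Sum>j\<in>J. lam j * a i p j)) u \<longrightarrow>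
      (\<forall>j\<in>J. flow_load I ?P a u j = B j)"
    using pareto_extremal_load_strictly_implementable[OF finite_I \<open>finite J\<close> finite_paths[OF finite_V]
        _ _ _ pareto_minimal_flow_loadD[OF pareto] extremal_flow_loadD[OF extremal]]
    by blast
  then show ?thesis
    using Gext_eq_flow_load
    by (intro exI[of _ lam]) (auto simp: WE_eq_wardrop_equilibrium wardrop_equilibrium_def
        feasible_flows_eq_flow_polytope)
qed

end

theorem theorem3p4:
  fixes V :: "'v set" and E :: "('v \<times> 'v) set"
    and I :: "'i set" and s t :: "'i \<Rightarrow> 'v" and d :: "'i \<Rightarrow> real"
    and J :: "'j set"
    and \<tau> :: "'i \<Rightarrow> 'v list \<Rightarrow> ('i \<times> 'v list \<Rightarrow> real) \<Rightarrow> real"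
    and g :: "'i \<Rightarrow> 'v list \<Rightarrow> 'j \<Rightarrow> ('i \<times> 'v list \<Rightarrow> real) \<Rightarrow> real"
    and B :: "'j \<Rightarrow> real"
  assumes "finite V" and "E \<subseteq> V \<times> V"
    and "finite I" and "\<forall>i\<in>I. s i \<in> V \<and> t i \<in> V" and "\<forall>i\<in>I. d i > 0"
    and "finite J"
    and g_nonneg: "\<forall>i\<in>I. \<forall>p\<in>paths V E s t i. \<forall>j\<in>J. \<forall>x\<in>feasible_flows V E s t I d. g i p j x \<ge> 0"
    and tau_cont: "\<forall>i\<in>I. \<forall>p\<in>paths V E s t i. continuous_on (feasible_flows V E s t I d) (\<tau> i p)"
    and g_const: "\<forall>i\<in>I. \<forall>p\<in>paths V E s t i. \<forall>j\<in>J. \<exists>c. \<forall>x\<in>feasible_flows V E s t I d. g i p j x = c"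
    and "extremal V E s t I d J g B"
    and "pareto_minimal V E s t I d J g B"
  shows "\<exists>lam :: 'j \<Rightarrow> real. (\<forall>j\<in>J. lam j > 0) \<and> WE V E s t I d J \<tau> g lam \<noteq> {} \<and>
           (\<forall>u\<in>WE V E s t I d J \<tau> g lam. \<forall>j\<in>J. Gext V E s t I g j u \<le> B j)"
proof -
  obtain x0 where x0: "x0 \<in> feasible_flows V E s t I d"
    using assms(10) by (auto simp: extremal_def feasible_budget_def)
  have const: "g i p j x = g i p j x0"
    if x: "x \<in> feasible_flows V E s t I d" and ipj: "i \<in> I" "p \<in> paths V E s t i" "j \<in> J" for x i p j
  proof -
    obtain c where "\<forall>x\<in>feasible_flows V E s t I d. g i p j x = c"
      using g_const ipj by blast
    then show ?thesis
      using x x0 by simp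
  qed
  have nonneg: "0 \<le> g i p j x0" if "i \<in> I" "p \<in> paths V E s t i" "j \<in> J" for i p j
    using g_nonneg that x0 by blast
  show ?thesis
    by (rule extremal_pareto_minimal_strictly_implementable[where a = "\<lambda>i p j. g i p j x0",
          OF assms(1,3) const nonneg assms(6,5) tau_cont assms(10,11)])
qed

end
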